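(* Let $p,q\in\Bbbk^\times$. Then $D(q)\cong D(p)$ if and only if $p=q^{\pm1}$.
   Context: $\Bbbk$ is an algebraically closed field of characteristic zero. Paths are written left to right. Let $Q$ be the quiver with vertices $e_1,e_2$, arrows $a,c:e_1\to e_2$ and $b,d:e_2\to e_1$; for $q\in\Bbbk^\times$, $D(q)=\Bbbk Q/(ab-(a+c)d,\ ba-q\,dc)$. *)

theory Defs
  imports "HOL-Algebra.QuotRing" "HOL-Computational_Algebra.Polynomial"
begin

definition alg_closed :: "'a::field itself \<Rightarrow> bool" where
  "alg_closed _ \<longleftrightarrow> (\<forall>P :: 'a poly. degree P > 0 \<longrightarrow> (\<exists>x. poly P x = 0))"

datatype vtx = E1 | E2
datatype arr = Aa | Bb | Cc | Dd

fun src :: "arr \<Rightarrow> vtx" where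
  "src Aa = E1" | "src Cc = E1" | "src Bb = E2" | "src Dd = E2"

fun tgt :: "arr \<Rightarrow> vtx" where
  "tgt Aa = E2" | "tgt Cc = E2" | "tgt Bb = E1" | "tgt Dd = E1"

text \<open>A path is a starting vertex together with a list of composable arrows
  (written left to right); the empty list gives the trivial path at the vertex.\<close>
type_synonym path = "vtx \<times> arr list"

fun valid_from :: "vtx \<Rightarrow> arr list \<Rightarrow> bool" where
  "valid_from v [] = True"
| "valid_from v (x # xs) = (src x = v \<and> valid_from (tgt x) xs)"

definition valid_path :: "path \<Rightarrow> bool" where
  "valid_path pth = valid_from (fst pth) (snd pth)"

definition end_vtx :: "path \<Rightarrow> vtx" where
  "end_vtx pth = (if snd pth = [] then fst pth else tgt (last (snd pth)))"

definition path_mult :: "path \<Rightarrow> path \<Rightarrow> path option" where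
  "path_mult x y = (if end_vtx x = fst y then Some (fst x, snd x @ snd y) else None)"

definition supp :: "(path \<Rightarrow> 'k::field) \<Rightarrow> path set" where
  "supp f = {x. f x \<noteq> 0}"

definition pa_mult :: "(path \<Rightarrow> 'k::field) \<Rightarrow> (path \<Rightarrow> 'k) \<Rightarrow> (path \<Rightarrow> 'k)" where
  "pa_mult f g = (\<lambda>z. \<Sum>(x, y) \<in> {(x, y) \<in> supp f \<times> supp g. path_mult x y = Some z}. f x * g y)"

definition path_alg :: "(path \<Rightarrow> 'k::field) ring" where
  "path_alg = \<lparr> partial_object.carrier = {f. finite (supp f) \<and> (\<forall>x \<in> supp f. valid_path x)},
                monoid.mult = pa_mult,
                monoid.one = (\<lambda>z. if z = (E1, []) \<or> z = (E2, []) then 1 else 0),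
                ring.zero = (\<lambda>_. 0),
                ring.add = (\<lambda>f g z. f z + g z) \<rparr>"

definition pa_smult :: "'k::field \<Rightarrow> (path \<Rightarrow> 'k) \<Rightarrow> (path \<Rightarrow> 'k)" where
  "pa_smult c f = (\<lambda>z. c * f z)"

definition basis_path :: "path \<Rightarrow> (path \<Rightarrow> 'k::field)" where
  "basis_path pth = (\<lambda>z. if z = pth then 1 else 0)"

definition arr_a :: "path \<Rightarrow> 'k::field" where "arr_a = basis_path (E1, [Aa])"
definition arr_b :: "path \<Rightarrow> 'k::field" where "arr_b = basis_path (E2, [Bb])"
definition arr_c :: "path \<Rightarrow> 'k::field" where "arr_c = basis_path (E1, [Cc])"
definition arr_d :: "path \<Rightarrow> 'k::field" where "arr_d = basis_path (E2, [Dd])"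

definition D_ideal :: "'k::field \<Rightarrow> (path \<Rightarrow> 'k) set" where
  "D_ideal q = genideal path_alg
     { arr_a \<otimes>\<^bsub>path_alg\<^esub> arr_b \<ominus>\<^bsub>path_alg\<^esub>
         ((arr_a \<oplus>\<^bsub>path_alg\<^esub> arr_c) \<otimes>\<^bsub>path_alg\<^esub> arr_d),
       arr_b \<otimes>\<^bsub>path_alg\<^esub> arr_a \<ominus>\<^bsub>path_alg\<^esub>
         pa_smult q (arr_d \<otimes>\<^bsub>path_alg\<^esub> arr_c) }"

definition D_alg :: "'k::field \<Rightarrow> (path \<Rightarrow> 'k) set ring" where
  "D_alg q = path_alg Quot (D_ideal q)"

text \<open>Isomorphism of k-algebras D(q) \<cong> D(p): a ring isomorphism of the quotient
  rings which is k-linear (scalars act on cosets via representatives).\<close>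
definition D_alg_iso :: "'k::field \<Rightarrow> 'k \<Rightarrow> bool" where
  "D_alg_iso q p \<longleftrightarrow> (\<exists>\<phi>. \<phi> \<in> ring_iso (D_alg q) (D_alg p) \<and>
     (\<forall>c f g. f \<in> carrier path_alg \<longrightarrow> g \<in> carrier path_alg \<longrightarrow>
        \<phi> (D_ideal q +>\<^bsub>path_alg\<^esub> f) = D_ideal p +>\<^bsub>path_alg\<^esub> g \<longrightarrow>
        \<phi> (D_ideal q +>\<^bsub>path_alg\<^esub> pa_smult c f) = D_ideal p +>\<^bsub>path_alg\<^esub> pa_smult c g))"

end

(*
  An isomorphism D(q) -> D(p) preserves the arrow ideal J and its square: an arrow x satisfies
  e_{src x} x = x and x e_{src x} = 0, so its image has no vertex component, and every element
  of J is a sum of products f x with x an arrow.  Hence it permutes the two vertex idempotents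
  and induces an invertible change of arrows on J/J^2, which must carry the relations
  ab - ad - cd and ba - q dc into the span of the relations of D(p).  Comparing the determinants
  of the 2x2 coefficient matrices, and the mixed term of the pencil they span, yields
  p (q + 1)^2 = q (p + 1)^2, i.e. p = q or p q = 1.  Conversely, for p = q^-1 the
  vertex-swapping change of arrows a -> (q - 1) b + d, c -> b, b -> - a - c,
  d -> - a + (q^-1 - 1) c maps the relations of D(q) onto those of D(q^-1).
*)

theory Submission
  imports Defs
begin

lemma sum_triangle_swap:
  fixes F :: "nat \<Rightarrow> nat \<Rightarrow> 'a::comm_monoid_add"
  shows "(\<Sum>k\<le>n. \<Sum>j\<le>k. F j k) = (\<Sum>j\<le>n. \<Sum>i\<le>n - j. F j (j + i))"
proof (induction n)
  case 0
  then show ?case by simp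
next
  case (Suc n)
  have "(\<Sum>j\<le>n. \<Sum>i\<le>Suc n - j. F j (j + i)) = (\<Sum>j\<le>n. (\<Sum>i\<le>n - j. F j (j + i)) + F j (Suc n))"
    by (rule sum.cong) (auto simp: Suc_diff_le)
  then show ?case
    using Suc by (simp add: sum.distrib add.assoc)
qed

lemma drop_eq_singleton_iff:
  assumes "k \<le> length zs"
  shows "drop k zs = [x] \<longleftrightarrow> zs \<noteq> [] \<and> k = length zs - 1 \<and> last zs = x"
proof
  assume h: "drop k zs = [x]"
  then have "length (drop k zs) = 1"
    by simp
  then have "length zs - k = 1"
    by simp
  moreover have "zs = take k zs @ [x]"
    using h append_take_drop_id[of k zs] by simp
  then have "last zs = x"
    by (metis last_snoc)
  ultimately show "zs \<noteq> [] \<and> k = length zs - 1 \<and> last zs = x"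
    by auto
next
  assume h: "zs \<noteq> [] \<and> k = length zs - 1 \<and> last zs = x"
  then have "zs \<noteq> []"
    by simp
  then have zs: "zs = butlast zs @ [last zs]"
    by simp
  have "drop (length (butlast zs)) (butlast zs @ [last zs]) = [last zs]"
    by simp
  then show "drop k zs = [x]"
    using h zs by (metis length_butlast)
qed

lemma finite_lists_length_UNIV:
  "finite (UNIV :: 'a set) \<Longrightarrow> finite {xs :: 'a list. length xs = n}"
  using finite_lists_length_eq[of "UNIV :: 'a set" n] by simp

lemma sum_lists_length_Suc:
  assumes "finite (UNIV :: 'a set)"
  shows "(\<Sum>xs | length xs = Suc n. F xs) = (\<Sum>x\<in>UNIV. \<Sum>xs | length xs = n. F (x # (xs :: 'a list)))"
proof -
  have "{xs :: 'a list. length xs = Suc n} = (\<lambda>(x, xs). x # xs) ` (UNIV \<times> {xs. length xs = n})"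
    by (auto simp: length_Suc_conv)
  moreover have "inj_on (\<lambda>(x, xs). x # xs) (UNIV \<times> {xs :: 'a list. length xs = n})"
    by (auto simp: inj_on_def)
  ultimately show ?thesis
    using assms by (simp add: sum.reindex sum.cartesian_product finite_lists_length_UNIV prod.case_distrib)
qed

lemma sum_lists_length_append:
  assumes "finite (UNIV :: 'a set)" "k \<le> n"
  shows "(\<Sum>xs | length xs = n. F xs) =
    (\<Sum>us | length us = k. \<Sum>vs | length vs = n - k. F (us @ (vs :: 'a list)))"
proof -
  have "{xs :: 'a list. length xs = n} =
      (\<lambda>(us, vs). us @ vs) ` ({us. length us = k} \<times> {vs. length vs = n - k})"
    using assms(2) by (auto intro!: image_eqI[where x = "(take k xs, drop k xs)" for xs])
  moreover have "inj_on (\<lambda>(us, vs). us @ vs) ({us :: 'a list. length us = k} \<times> {vs. length vs = n - k})"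
    by (auto simp: inj_on_def)
  ultimately show ?thesis
    using assms(1) by (simp add: sum.reindex sum.cartesian_product finite_lists_length_UNIV prod.case_distrib)
qed

lemma singular_2x2_left_kernel:
  fixes a b c d :: "'k::field"
  assumes "a * d - b * c = 0"
  obtains s t where "s \<noteq> 0 \<or> t \<noteq> 0" "s * a + t * c = 0" "s * b + t * d = 0"
proof (cases "a = 0 \<and> c = 0")
  case True
  show thesis
  proof (cases "b = 0 \<and> d = 0")
    case True
    with \<open>a = 0 \<and> c = 0\<close> show thesis
      by (intro that[of 1 0]) simp_all
  next
    case False
    with True show thesis
      by (intro that[of d "- b"]) (auto simp: algebra_simps)
  qed
next
  case False
  with assms show thesis
    by (intro that[of c "- a"]) (auto simp: algebra_simps)
qed

text \<open>Substituting \<open>a \<mapsto> g\<^sub>1 a + g\<^sub>2 c, c \<mapsto> g\<^sub>3 a + g\<^sub>4 c,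
  b \<mapsto> h\<^sub>1 b + h\<^sub>2 d, d \<mapsto> h\<^sub>3 b + h\<^sub>4 d\<close> into \<open>ab - ad - cd\<close> and \<open>ba - q dc\<close>
  gives the coefficient matrices \<open>X = G\<^sup>T M H\<close> and \<open>Y\<close> with \<open>Y\<^sup>T = G\<^sup>T N H\<close>, where
  \<open>M = [[1, -1], [0, -1]]\<close> and \<open>N = diag(1, -q)\<close>.  Hence
  \<open>det (X + t Y\<^sup>T) = - det G det H (1 + (q + 1) t + q t\<^sup>2)\<close>, and this pins down \<open>p\<close>
  when \<open>X\<close> and \<open>Y\<close> are multiples of the two relation matrices of \<open>D(p)\<close>, in either order.\<close>

lemma transformed_relations_determine_parameter:
  fixes g1 g2 g3 g4 h1 h2 h3 h4 l m p q :: "'k::field"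
  defines "X \<equiv> (g1*h1 - g1*h3 - g3*h3, g1*h2 - g1*h4 - g3*h4, g2*h1 - g2*h3 - g4*h3,
                 g2*h2 - g2*h4 - g4*h4)"
    and "Y \<equiv> (h1*g1 - q*(h3*g3), h1*g2 - q*(h3*g4), h2*g1 - q*(h4*g3), h2*g2 - q*(h4*g4))"
  assumes "g1 * g4 - g2 * g3 \<noteq> 0" and "h1 * h4 - h2 * h3 \<noteq> 0"
    and "X = (l, -l, 0, -l) \<and> Y = (m, 0, 0, -p*m) \<or> X = (m, 0, 0, -p*m) \<and> Y = (l, -l, 0, -l)"
  shows "p = q \<or> p * q = 1"
proof -
  define D where "D = (g1 * g4 - g2 * g3) * (h1 * h4 - h2 * h3)"
  have "D \<noteq> 0"
    using assms(3,4) by (simp add: D_def)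
  define det2 :: "'k \<times> 'k \<times> 'k \<times> 'k \<Rightarrow> 'k" where
    "det2 = (\<lambda>(x1, x2, x3, x4). x1 * x4 - x2 * x3)"
  define mixed :: "'k \<times> 'k \<times> 'k \<times> 'k \<Rightarrow> 'k \<times> 'k \<times> 'k \<times> 'k \<Rightarrow> 'k" where
    "mixed = (\<lambda>(x1, x2, x3, x4) (y1, y2, y3, y4). x1 * y4 + x4 * y1 - x2 * y2 - x3 * y3)"
  have "det2 X = - D" "det2 Y = - (q * D)" "mixed X Y = - ((q + 1) * D)"
    by (simp_all add: X_def Y_def D_def det2_def mixed_def algebra_simps)
  with assms(5) have lm: "p * (l * m)\<^sup>2 = q * D\<^sup>2" "l * m * (p + 1) = (q + 1) * D"
    by (auto simp: det2_def mixed_def power2_eq_square algebra_simps)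
  have "p * ((q + 1) * D)\<^sup>2 = p * (l * m)\<^sup>2 * (p + 1)\<^sup>2"
    by (simp flip: lm(2) add: power_mult_distrib)
  also have "\<dots> = q * D\<^sup>2 * (p + 1)\<^sup>2"
    by (simp add: lm(1))
  finally have "D\<^sup>2 * (p * (q + 1)\<^sup>2) = D\<^sup>2 * (q * (p + 1)\<^sup>2)"
    by (simp add: power_mult_distrib mult_ac)
  then have "p * (q + 1)\<^sup>2 - q * (p + 1)\<^sup>2 = 0"
    using \<open>D \<noteq> 0\<close> by simp
  moreover have "(p - q) * (1 - p * q) = p * (q + 1)\<^sup>2 - q * (p + 1)\<^sup>2"
    by (simp add: power2_eq_square algebra_simps)
  ultimately have "(p - q) * (1 - p * q) = 0"
    by simp
  then show ?thesis
    by auto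
qed

lemma UNIV_arr: "(UNIV :: arr set) = {Aa, Bb, Cc, Dd}"
  using arr.exhaust by auto

lemma finite_UNIV_arr [simp]: "finite (UNIV :: arr set)"
  by (simp add: UNIV_arr)

lemma src_ne_tgt: "src x \<noteq> tgt x"
  by (cases x) auto

lemma src_eq_E1_iff: "src x = E1 \<longleftrightarrow> x = Aa \<or> x = Cc"
  and src_eq_E2_iff: "src x = E2 \<longleftrightarrow> x = Bb \<or> x = Dd"
  by (cases x; simp)+

section \<open>The path algebra\<close>

lemma end_vtx_Nil [simp]: "end_vtx (v, []) = v"
  by (simp add: end_vtx_def)

lemma end_vtx_append: "end_vtx (end_vtx (v, xs), ys) = end_vtx (v, xs @ ys)"
  by (simp add: end_vtx_def)

lemma valid_from_append:
  "valid_from v (xs @ ys) \<longleftrightarrow> valid_from v xs \<and> valid_from (end_vtx (v, xs)) ys"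
  by (induction xs arbitrary: v) (auto simp: end_vtx_def)

lemma path_mult_eq_Some_iff:
  "path_mult x y = Some (v, zs) \<longleftrightarrow>
     (\<exists>k\<le>length zs. x = (v, take k zs) \<and> y = (end_vtx (v, take k zs), drop k zs))"
proof
  assume "path_mult x y = Some (v, zs)"
  then obtain xs ys where "x = (v, xs)" "y = (end_vtx x, ys)" "zs = xs @ ys"
    by (cases x; cases y) (auto simp: path_mult_def split: if_splits)
  then show "\<exists>k\<le>length zs. x = (v, take k zs) \<and> y = (end_vtx (v, take k zs), drop k zs)"
    by (intro exI[of _ "length xs"]) auto
qed (auto simp: path_mult_def)

lemma valid_path_path_mult:
  "path_mult x y = Some z \<Longrightarrow> valid_path x \<Longrightarrow> valid_path y \<Longrightarrow> valid_path z"
  by (cases x; cases y)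
    (auto simp: path_mult_def valid_path_def valid_from_append split: if_splits)

lemma pa_mult_apply:
  "pa_mult f g (v, zs) =
     (\<Sum>k\<le>length zs. f (v, take k zs) * g (end_vtx (v, take k zs), drop k zs))"
proof -
  define cut where "cut k = ((v, take k zs), (end_vtx (v, take k zs), drop k zs))" for k
  have inj: "inj_on cut {..length zs}"
    by (rule inj_onI) (auto simp: cut_def dest!: arg_cong[where f = length])
  have "pa_mult f g (v, zs) =
      (\<Sum>(x, y) \<in> {(x, y) \<in> supp f \<times> supp g. path_mult x y = Some (v, zs)}. f x * g y)"
    by (simp add: pa_mult_def)
  also have "\<dots> = (\<Sum>(x, y) \<in> cut ` {..length zs}. f x * g y)"
    by (rule sum.mono_neutral_left) (auto simp: cut_def supp_def path_mult_eq_Some_iff)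
  also have "\<dots> = (\<Sum>k\<le>length zs. f (v, take k zs) * g (end_vtx (v, take k zs), drop k zs))"
    by (subst sum.reindex[OF inj]) (simp add: cut_def)
  finally show ?thesis .
qed

lemma pa_mult_length0: "pa_mult f g (v, []) = f (v, []) * g (v, [])"
  by (simp add: pa_mult_apply)

lemma pa_mult_length1:
  "pa_mult f g (v, [x]) = f (v, []) * g (v, [x]) + f (v, [x]) * g (tgt x, [])"
  by (simp add: pa_mult_apply end_vtx_def)

lemma pa_mult_length2:
  "pa_mult f g (v, [x, y]) =
     f (v, []) * g (v, [x, y]) + f (v, [x]) * g (tgt x, [y]) + f (v, [x, y]) * g (tgt y, [])"
  by (simp add: pa_mult_apply numeral_2_eq_2 end_vtx_def)

lemma pa_mult_assoc: "pa_mult (pa_mult f g) h = pa_mult f (pa_mult g h)"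
proof
  fix z :: path
  obtain v zs where z: "z = (v, zs)"
    by (cases z)
  let ?n = "length zs"
  let ?F = "\<lambda>j k. f (v, take j zs) * g (end_vtx (v, take j zs), take (k - j) (drop j zs))
                 * h (end_vtx (v, take k zs), drop k zs)"
  have "pa_mult (pa_mult f g) h (v, zs) = (\<Sum>k\<le>?n. \<Sum>j\<le>k. ?F j k)"
    unfolding pa_mult_apply sum_distrib_right
    by (intro sum.cong refl) (auto simp: min_def drop_take)
  also have "\<dots> = (\<Sum>j\<le>?n. \<Sum>i\<le>?n - j. ?F j (j + i))"
    by (rule sum_triangle_swap)
  also have "\<dots> = pa_mult f (pa_mult g h) (v, zs)"
    by (simp add: pa_mult_apply sum_distrib_left)
      (intro sum.cong refl, simp add: end_vtx_append take_add ac_simps)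
  finally show "pa_mult (pa_mult f g) h z = pa_mult f (pa_mult g h) z"
    by (simp add: z)
qed

lemma pa_mult_scalar_left: "pa_mult (\<lambda>z. if snd z = [] then c else 0) f = pa_smult c f"
proof
  fix z :: path
  obtain v zs where z: "z = (v, zs)"
    by (cases z)
  have "pa_mult (\<lambda>z. if snd z = [] then c else 0) f (v, zs) =
      (\<Sum>k\<le>length zs. if k = 0 then c * f (v, zs) else 0)"
    unfolding pa_mult_apply by (rule sum.cong) auto
  then show "pa_mult (\<lambda>z. if snd z = [] then c else 0) f z = pa_smult c f z"
    by (simp add: z pa_smult_def)
qed

lemma pa_mult_one_left: "pa_mult (\<lambda>z. if snd z = [] then 1 else 0) f = f"
  by (simp add: pa_mult_scalar_left pa_smult_def)

lemma pa_mult_one_right: "pa_mult f (\<lambda>z. if snd z = [] then 1 else 0) = f"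
proof
  fix z :: path
  obtain v zs where z: "z = (v, zs)"
    by (cases z)
  have "pa_mult f (\<lambda>z. if snd z = [] then 1 else 0) (v, zs) =
      (\<Sum>k\<le>length zs. if k = length zs then f (v, zs) else 0)"
    unfolding pa_mult_apply by (rule sum.cong) auto
  then show "pa_mult f (\<lambda>z. if snd z = [] then 1 else 0) z = f z"
    by (simp add: z)
qed

lemma pa_mult_add_left: "pa_mult (\<lambda>z. f z + g z) h = (\<lambda>z. pa_mult f h z + pa_mult g h z)"
  by (rule ext, case_tac z) (simp add: pa_mult_apply distrib_right sum.distrib)

lemma pa_mult_add_right: "pa_mult h (\<lambda>z. f z + g z) = (\<lambda>z. pa_mult h f z + pa_mult h g z)"
  by (rule ext, case_tac z) (simp add: pa_mult_apply distrib_left sum.distrib)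

lemma pa_mult_nonzeroE:
  assumes "pa_mult f g z \<noteq> 0"
  obtains x y where "x \<in> supp f" "y \<in> supp g" "path_mult x y = Some z"
proof -
  obtain xy where "xy \<in> {(x, y) \<in> supp f \<times> supp g. path_mult x y = Some z}"
    using sum.not_neutral_contains_not_neutral assms unfolding pa_mult_def by blast
  then show thesis
    using that by auto
qed

lemma path_alg_carrier:
  "carrier path_alg = {f. finite (supp f) \<and> (\<forall>x \<in> supp f. valid_path x)}"
  by (simp add: path_alg_def)

lemma path_alg_carrierI:
  "finite (supp f) \<Longrightarrow> (\<And>x. f x \<noteq> 0 \<Longrightarrow> valid_path x) \<Longrightarrow> f \<in> carrier path_alg"
  by (auto simp: path_alg_carrier supp_def)

lemma path_alg_carrierD:
  "f \<in> carrier path_alg \<Longrightarrow> f x \<noteq> 0 \<Longrightarrow> valid_path x"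
  unfolding path_alg_carrier supp_def by blast

lemma finite_supp_path_alg: "f \<in> carrier path_alg \<Longrightarrow> finite (supp f)"
  by (simp add: path_alg_carrier)

lemma path_alg_mult [simp]: "f \<otimes>\<^bsub>path_alg\<^esub> g = pa_mult f g"
  and path_alg_add [simp]: "f \<oplus>\<^bsub>path_alg\<^esub> g = (\<lambda>z. f z + g z)"
  and path_alg_zero [simp]: "\<zero>\<^bsub>path_alg\<^esub> = (\<lambda>_. 0)"
  by (simp_all add: path_alg_def)

lemma trivial_path_iff: "snd z = [] \<longleftrightarrow> z = (E1, []) \<or> z = (E2, [])"
  by (cases z; cases "fst z") auto

lemma path_alg_one: "\<one>\<^bsub>path_alg\<^esub> = (\<lambda>z. if snd z = [] then 1 else 0)"
  by (simp add: path_alg_def trivial_path_iff)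

lemma pa_mult_closed:
  assumes f: "f \<in> carrier path_alg" and g: "g \<in> carrier path_alg"
  shows "pa_mult f g \<in> carrier path_alg"
proof (rule path_alg_carrierI)
  have "supp (pa_mult f g) \<subseteq> (\<lambda>(x, y). the (path_mult x y)) ` (supp f \<times> supp g)"
    by (auto simp: supp_def elim!: pa_mult_nonzeroE intro!: image_eqI)
  then show "finite (supp (pa_mult f g))"
    by (rule finite_subset) (simp add: f g finite_supp_path_alg)
next
  fix z
  assume "pa_mult f g z \<noteq> 0"
  then obtain x y where "x \<in> supp f" "y \<in> supp g" "path_mult x y = Some z"
    by (rule pa_mult_nonzeroE)
  then show "valid_path z"
    using f g by (auto simp: path_alg_carrier intro: valid_path_path_mult)
qed

lemma uminus_closed_path_alg: "f \<in> carrier path_alg \<Longrightarrow> (\<lambda>z. - f z) \<in> carrier path_alg"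
  by (simp add: path_alg_carrier supp_def)

lemma ring_path_alg: "ring (path_alg :: (path \<Rightarrow> 'k::field) ring)"
proof (rule ringI)
  show "abelian_group (path_alg :: (path \<Rightarrow> 'k) ring)"
  proof (rule abelian_groupI)
    fix f g :: "path \<Rightarrow> 'k"
    assume "f \<in> carrier path_alg" "g \<in> carrier path_alg"
    moreover have "supp (\<lambda>z. f z + g z) \<subseteq> supp f \<union> supp g"
      by (auto simp: supp_def)
    ultimately show "f \<oplus>\<^bsub>path_alg\<^esub> g \<in> carrier path_alg"
      by (auto simp: path_alg_carrier intro: finite_subset)
  next
    show "\<zero>\<^bsub>path_alg\<^esub> \<in> carrier (path_alg :: (path \<Rightarrow> 'k) ring)"
      by (simp add: path_alg_carrier supp_def)
  next
    fix f :: "path \<Rightarrow> 'k"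
    assume "f \<in> carrier path_alg"
    then show "\<exists>g\<in>carrier path_alg. g \<oplus>\<^bsub>path_alg\<^esub> f = \<zero>\<^bsub>path_alg\<^esub>"
      by (intro bexI[of _ "\<lambda>z. - f z"] uminus_closed_path_alg) auto
  qed (auto simp: add.assoc add.commute)
next
  show "monoid (path_alg :: (path \<Rightarrow> 'k) ring)"
  proof (rule monoidI)
    have "supp (\<one>\<^bsub>path_alg\<^esub> :: path \<Rightarrow> 'k) = {(E1, []), (E2, [])}"
      by (auto simp: supp_def path_alg_one trivial_path_iff)
    then show "\<one>\<^bsub>path_alg\<^esub> \<in> carrier (path_alg :: (path \<Rightarrow> 'k) ring)"
      by (simp add: path_alg_carrier valid_path_def)
  qed (auto simp: pa_mult_closed pa_mult_assoc path_alg_one pa_mult_one_left pa_mult_one_right)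
qed (auto simp: pa_mult_add_left pa_mult_add_right)

interpretation PA: ring "path_alg :: (path \<Rightarrow> 'k::field) ring"
  by (rule ring_path_alg)

lemma path_alg_a_inv: "f \<in> carrier path_alg \<Longrightarrow> \<ominus>\<^bsub>path_alg\<^esub> f = (\<lambda>z. - f z)"
  by (rule PA.minus_equality) (auto simp: path_alg_carrier supp_def)

lemma path_alg_minus:
  "f \<in> carrier path_alg \<Longrightarrow> g \<in> carrier path_alg \<Longrightarrow> f \<ominus>\<^bsub>path_alg\<^esub> g = (\<lambda>z. f z - g z)"
  by (simp add: a_minus_def path_alg_a_inv)

lemma add_closed_path_alg:
  "f \<in> carrier path_alg \<Longrightarrow> g \<in> carrier path_alg \<Longrightarrow> (\<lambda>z. f z + g z) \<in> carrier path_alg"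
  using PA.a_closed by simp

lemma zero_closed_path_alg [simp]: "(\<lambda>_. 0) \<in> carrier path_alg"
  using PA.zero_closed by simp

lemma diff_closed_path_alg:
  "f \<in> carrier path_alg \<Longrightarrow> g \<in> carrier path_alg \<Longrightarrow> (\<lambda>z. f z - g z) \<in> carrier path_alg"
  using add_closed_path_alg[OF _ uminus_closed_path_alg, of f g] by simp

lemma sum_closed_path_alg:
  "finite A \<Longrightarrow> (\<And>x. x \<in> A \<Longrightarrow> g x \<in> carrier path_alg) \<Longrightarrow>
     (\<lambda>z. \<Sum>x\<in>A. g x z) \<in> carrier path_alg"
  by (induction A rule: finite_induct) (simp_all add: add_closed_path_alg)

lemma pa_smult_closed: "f \<in> carrier path_alg \<Longrightarrow> pa_smult c f \<in> carrier path_alg"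
  by (rule path_alg_carrierI)
    (auto simp: pa_smult_def supp_def path_alg_carrier intro: finite_subset)

lemma ideal_path_algI:
  assumes "S \<subseteq> carrier path_alg" "(\<lambda>_. 0) \<in> S"
    and "\<And>f g. f \<in> S \<Longrightarrow> g \<in> S \<Longrightarrow> (\<lambda>z. f z + g z) \<in> S"
    and "\<And>f. f \<in> S \<Longrightarrow> (\<lambda>z. - f z) \<in> S"
    and "\<And>f r. f \<in> S \<Longrightarrow> r \<in> carrier path_alg \<Longrightarrow> pa_mult r f \<in> S"
    and "\<And>f r. f \<in> S \<Longrightarrow> r \<in> carrier path_alg \<Longrightarrow> pa_mult f r \<in> S"
  shows "ideal S (path_alg :: (path \<Rightarrow> 'k::field) ring)"
proof (rule idealI[OF ring_path_alg])
  show "subgroup S (add_monoid (path_alg :: (path \<Rightarrow> 'k) ring))"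
  proof (rule PA.add.subgroupI)
    fix f
    assume "f \<in> S"
    then show "\<ominus>\<^bsub>path_alg\<^esub> f \<in> S"
      using assms(1,4) path_alg_a_inv[of f] by auto
  qed (use assms in auto)
qed (use assms in auto)

section \<open>Vertices, arrows and the relations\<close>

definition vertex :: "vtx \<Rightarrow> path \<Rightarrow> 'k::field" where
  "vertex v = basis_path (v, [])"

definition arrow :: "arr \<Rightarrow> path \<Rightarrow> 'k::field" where
  "arrow x = basis_path (src x, [x])"

lemma arr_eq_arrow: "arr_a = arrow Aa" "arr_b = arrow Bb" "arr_c = arrow Cc" "arr_d = arrow Dd"
  by (simp_all add: arr_a_def arr_b_def arr_c_def arr_d_def arrow_def)

lemma pa_mult_basis_path:
  "pa_mult (basis_path x) (basis_path y) =
     (case path_mult x y of None \<Rightarrow> (\<lambda>_. 0) | Some z \<Rightarrow> (basis_path z :: path \<Rightarrow> 'k::field))"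
proof
  fix w
  have "supp (basis_path u :: path \<Rightarrow> 'k) = {u}" for u
    by (auto simp: supp_def basis_path_def)
  then have "{(x', y') \<in> supp (basis_path x :: path \<Rightarrow> 'k) \<times> supp (basis_path y :: path \<Rightarrow> 'k).
               path_mult x' y' = Some w} = (if path_mult x y = Some w then {(x, y)} else {})"
    by auto
  then show "pa_mult (basis_path x) (basis_path y) w =
     (case path_mult x y of None \<Rightarrow> (\<lambda>_. 0) | Some z \<Rightarrow> (basis_path z :: path \<Rightarrow> 'k)) w"
    by (auto simp: pa_mult_def basis_path_def split: option.split)
qed

lemma basis_path_closed: "valid_path x \<Longrightarrow> basis_path x \<in> carrier path_alg"
  unfolding basis_path_def by (rule path_alg_carrierI) (simp_all add: supp_def split: if_splits)

lemma vertex_closed: "vertex v \<in> carrier path_alg"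
  and arrow_closed: "arrow x \<in> carrier path_alg"
  by (auto simp: vertex_def arrow_def valid_path_def intro: basis_path_closed)

lemma arrow_length1: "arrow x (v, [y]) = (if v = src x \<and> y = x then 1 else 0)"
  by (auto simp: arrow_def basis_path_def)

lemma pa_mult_vertex_arrow: "pa_mult (vertex (src x)) (arrow x) = arrow x"
  and pa_mult_arrow_vertex_src: "pa_mult (arrow x) (vertex (src x)) = (\<lambda>_. 0)"
  and pa_mult_vertex_vertex: "pa_mult (vertex v) (vertex v) = vertex v"
  using src_ne_tgt[of x]
  by (simp_all add: vertex_def arrow_def pa_mult_basis_path path_mult_def end_vtx_def)

lemma pa_mult_arrow_arrow:
  "tgt x = src y \<Longrightarrow> pa_mult (arrow x) (arrow y) = basis_path (src x, [x, y])"
  by (simp add: arrow_def pa_mult_basis_path path_mult_def end_vtx_def)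

lemma vertex_sum: "(\<lambda>z. vertex E1 z + vertex E2 z) = \<one>\<^bsub>path_alg\<^esub>"
  by (auto simp: vertex_def basis_path_def path_alg_one trivial_path_iff)

definition rel1 :: "path \<Rightarrow> 'k::field" where
  "rel1 z = (if z = (E1, [Aa, Bb]) then 1 else 0) - (if z = (E1, [Aa, Dd]) then 1 else 0)
        - (if z = (E1, [Cc, Dd]) then 1 else 0)"

definition rel2 :: "'k::field \<Rightarrow> path \<Rightarrow> 'k" where
  "rel2 q z = (if z = (E2, [Bb, Aa]) then 1 else 0) - q * (if z = (E2, [Dd, Cc]) then 1 else 0)"

lemma rel1_eq: "rel1 = (\<lambda>z. pa_mult (arrow Aa) (arrow Bb) z - pa_mult (arrow Aa) (arrow Dd) z
                               - pa_mult (arrow Cc) (arrow Dd) z)"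
  by (auto simp: pa_mult_arrow_arrow rel1_def basis_path_def)

lemma rel2_eq: "rel2 q = (\<lambda>z. pa_mult (arrow Bb) (arrow Aa) z
                                 - pa_smult q (pa_mult (arrow Dd) (arrow Cc)) z)"
  by (auto simp: pa_mult_arrow_arrow rel2_def basis_path_def pa_smult_def)

lemma rel1_closed: "rel1 \<in> carrier path_alg"
  and rel2_closed: "rel2 q \<in> carrier path_alg"
  unfolding rel1_eq rel2_eq
  by (simp_all add: arrow_closed pa_mult_closed pa_smult_closed flip: path_alg_minus)

lemma D_ideal_genideal: "D_ideal q = genideal path_alg {rel1, rel2 q}"
proof -
  have rel1: "arr_a \<otimes>\<^bsub>path_alg\<^esub> arr_b \<ominus>\<^bsub>path_alg\<^esub>
          ((arr_a \<oplus>\<^bsub>path_alg\<^esub> arr_c) \<otimes>\<^bsub>path_alg\<^esub> arr_d) = rel1"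
    by (simp add: arr_eq_arrow rel1_eq pa_mult_add_left path_alg_minus arrow_closed
        pa_mult_closed add_closed_path_alg algebra_simps)
  have rel2: "arr_b \<otimes>\<^bsub>path_alg\<^esub> arr_a \<ominus>\<^bsub>path_alg\<^esub>
          pa_smult q (arr_d \<otimes>\<^bsub>path_alg\<^esub> arr_c) = rel2 q"
    by (simp add: arr_eq_arrow rel2_eq path_alg_minus arrow_closed pa_mult_closed pa_smult_closed)
  show ?thesis
    unfolding D_ideal_def rel1 rel2 ..
qed

lemma ideal_D_ideal: "ideal (D_ideal q) (path_alg :: (path \<Rightarrow> 'k::field) ring)"
  unfolding D_ideal_genideal by (rule PA.genideal_ideal) (simp add: rel1_closed rel2_closed)

lemma rel1_mem_D_ideal: "rel1 \<in> D_ideal q"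
  and rel2_mem_D_ideal: "rel2 q \<in> D_ideal q"
  using PA.genideal_self[of "{rel1, rel2 q}"] rel1_closed rel2_closed
  by (auto simp: D_ideal_genideal)

text \<open>The ideal \<open>span{rel1, rel2 q} + J\<^sup>3\<close> of \<open>kQ\<close>, with \<open>J\<close> the arrow ideal.\<close>

definition rel_span_ideal :: "'k::field \<Rightarrow> (path \<Rightarrow> 'k) set" where
  "rel_span_ideal q = {f \<in> carrier path_alg. (\<forall>v. f (v, []) = 0) \<and> (\<forall>v x. f (v, [x]) = 0) \<and>
     (\<exists>l m. \<forall>v x y. f (v, [x, y]) = l * rel1 (v, [x, y]) + m * rel2 q (v, [x, y]))}"

lemma rel1_E2: "rel1 (E2, xs) = 0"
  and rel2_E1: "rel2 q (E1, xs) = 0"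
  and rel1_ends_E2: "y = Aa \<or> y = Cc \<Longrightarrow> rel1 (v, [x, y]) = 0"
  and rel2_ends_E1: "y = Bb \<or> y = Dd \<Longrightarrow> rel2 q (v, [x, y]) = 0"
  by (auto simp: rel1_def rel2_def)

lemma rel_span_idealI:
  assumes "f \<in> carrier path_alg" "\<And>v. f (v, []) = 0" "\<And>v x. f (v, [x]) = 0"
    and "\<And>v x y. f (v, [x, y]) = l * rel1 (v, [x, y]) + m * rel2 q (v, [x, y])"
  shows "f \<in> rel_span_ideal q"
  using assms unfolding rel_span_ideal_def by blast

lemma ideal_rel_span_ideal: "ideal (rel_span_ideal q) (path_alg :: (path \<Rightarrow> 'k::field) ring)"
proof (rule ideal_path_algI)
  show "rel_span_ideal q \<subseteq> carrier path_alg"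
    by (auto simp: rel_span_ideal_def)
  show "(\<lambda>_. 0) \<in> rel_span_ideal q"
    by (rule rel_span_idealI[where l = 0 and m = 0]) simp_all
next
  fix f g
  assume f_mem: "f \<in> rel_span_ideal q" and g_mem: "g \<in> rel_span_ideal q"
  obtain l m where f: "f \<in> carrier path_alg" "\<And>v. f (v, []) = 0" "\<And>v x. f (v, [x]) = 0"
      "\<And>v x y. f (v, [x, y]) = l * rel1 (v, [x, y]) + m * rel2 q (v, [x, y])"
    using f_mem unfolding rel_span_ideal_def by blast
  obtain l' m' where g: "g \<in> carrier path_alg" "\<And>v. g (v, []) = 0" "\<And>v x. g (v, [x]) = 0"
      "\<And>v x y. g (v, [x, y]) = l' * rel1 (v, [x, y]) + m' * rel2 q (v, [x, y])"
    using g_mem unfolding rel_span_ideal_def by blast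
  show "(\<lambda>z. f z + g z) \<in> rel_span_ideal q"
    by (rule rel_span_idealI[where l = "l + l'" and m = "m + m'"])
      (simp_all add: f g add_closed_path_alg algebra_simps)
next
  fix f
  assume "f \<in> rel_span_ideal q"
  then obtain l m where f: "f \<in> carrier path_alg" "\<And>v. f (v, []) = 0" "\<And>v x. f (v, [x]) = 0"
      "\<And>v x y. f (v, [x, y]) = l * rel1 (v, [x, y]) + m * rel2 q (v, [x, y])"
    unfolding rel_span_ideal_def by blast
  show "(\<lambda>z. - f z) \<in> rel_span_ideal q"
    by (rule rel_span_idealI[where l = "- l" and m = "- m"]) (simp_all add: f uminus_closed_path_alg)
next
  fix f r :: "path \<Rightarrow> 'k"
  assume f_mem: "f \<in> rel_span_ideal q" and r: "r \<in> carrier path_alg"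
  obtain l m where f: "f \<in> carrier path_alg" "\<And>v. f (v, []) = 0" "\<And>v x. f (v, [x]) = 0"
      "\<And>v x y. f (v, [x, y]) = l * rel1 (v, [x, y]) + m * rel2 q (v, [x, y])"
    using f_mem unfolding rel_span_ideal_def by blast
  show "pa_mult r f \<in> rel_span_ideal q"
  proof (rule rel_span_idealI[where l = "l * r (E1, [])" and m = "m * r (E2, [])"])
    show "pa_mult r f (v, [x, y]) =
        (l * r (E1, [])) * rel1 (v, [x, y]) + (m * r (E2, [])) * rel2 q (v, [x, y])" for v x y
      by (cases v) (simp_all add: f pa_mult_length2 rel1_E2 rel2_E1 algebra_simps)
  qed (simp_all add: f r pa_mult_closed pa_mult_length0 pa_mult_length1)
  show "pa_mult f r \<in> rel_span_ideal q"
  proof (rule rel_span_idealI[where l = "l * r (E1, [])" and m = "m * r (E2, [])"])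
    show "pa_mult f r (v, [x, y]) =
        (l * r (E1, [])) * rel1 (v, [x, y]) + (m * r (E2, [])) * rel2 q (v, [x, y])" for v x y
      by (cases y) (simp_all add: f pa_mult_length2 rel1_ends_E2 rel2_ends_E1 algebra_simps)
  qed (simp_all add: f r pa_mult_closed pa_mult_length0 pa_mult_length1)
qed

lemma D_ideal_subset_rel_span_ideal: "D_ideal q \<subseteq> rel_span_ideal q"
  unfolding D_ideal_genideal
proof (rule PA.genideal_minimal[OF ideal_rel_span_ideal])
  show "{rel1, rel2 q} \<subseteq> rel_span_ideal q"
    using rel_span_idealI[OF rel1_closed, where l = 1 and m = 0 and q = q]
      rel_span_idealI[OF rel2_closed, where l = 0 and m = 1 and q = q]
    by (simp add: rel1_def rel2_def)
qed

lemma D_ideal_length0: "f \<in> D_ideal q \<Longrightarrow> f (v, []) = 0"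
  and D_ideal_length1: "f \<in> D_ideal q \<Longrightarrow> f (v, [x]) = 0"
  and D_ideal_length2:
    "f \<in> D_ideal q \<Longrightarrow> \<exists>l m. \<forall>v x y. f (v, [x, y]) = l * rel1 (v, [x, y]) + m * rel2 q (v, [x, y])"
  using D_ideal_subset_rel_span_ideal[of q] by (auto simp: rel_span_ideal_def)

section \<open>The quotient algebra\<close>

abbreviation D_coset :: "'k::field \<Rightarrow> (path \<Rightarrow> 'k) \<Rightarrow> (path \<Rightarrow> 'k) set" where
  "D_coset q f \<equiv> D_ideal q +>\<^bsub>path_alg\<^esub> f"

lemma D_ideal_subset: "D_ideal q \<subseteq> carrier (path_alg :: (path \<Rightarrow> 'k::field) ring)"
  using additive_subgroup.a_subset ideal.axioms(1)[OF ideal_D_ideal] by blast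

lemma D_ideal_add: "f \<in> D_ideal q \<Longrightarrow> g \<in> D_ideal q \<Longrightarrow> (\<lambda>z. f z + g z) \<in> D_ideal (q::'k::field)"
  using additive_subgroup.a_closed[OF ideal.axioms(1)[OF ideal_D_ideal]] by fastforce

lemma D_ideal_uminus: "f \<in> D_ideal q \<Longrightarrow> (\<lambda>z. - f z) \<in> D_ideal (q::'k::field)"
  using additive_subgroup.a_inv_closed[OF ideal.axioms(1)[OF ideal_D_ideal]] D_ideal_subset
  by (fastforce simp: path_alg_a_inv)

lemma D_ideal_zero: "(\<lambda>_. 0) \<in> D_ideal (q::'k::field)"
  using additive_subgroup.zero_closed[OF ideal.axioms(1)[OF ideal_D_ideal]] by simp

lemma abelian_subgroup_D_ideal:
  "abelian_subgroup (D_ideal q) (path_alg :: (path \<Rightarrow> 'k::field) ring)"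
  by (rule abelian_subgroupI3[OF ideal.axioms(1)[OF ideal_D_ideal] PA.abelian_group_axioms])

definition D_cong :: "'k::field \<Rightarrow> (path \<Rightarrow> 'k) \<Rightarrow> (path \<Rightarrow> 'k) \<Rightarrow> bool" where
  "D_cong q f g \<longleftrightarrow> (\<lambda>z. f z - g z) \<in> D_ideal q"

lemma D_cong_refl: "D_cong q f f"
  by (simp add: D_cong_def D_ideal_zero)

lemma D_cong_sym: "D_cong q f g \<Longrightarrow> D_cong q g f"
  unfolding D_cong_def by (drule D_ideal_uminus) simp

lemma D_cong_trans [trans]: "D_cong q f g \<Longrightarrow> D_cong q g h \<Longrightarrow> D_cong q f h"
  unfolding D_cong_def by (drule (1) D_ideal_add) simp

lemma D_cong_add: "D_cong q f f' \<Longrightarrow> D_cong q g g' \<Longrightarrow> D_cong q (\<lambda>z. f z + g z) (\<lambda>z. f' z + g' z)"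
  unfolding D_cong_def by (drule (1) D_ideal_add) (simp add: algebra_simps)

lemma D_cong_uminus: "D_cong q f f' \<Longrightarrow> D_cong q (\<lambda>z. - f z) (\<lambda>z. - f' z)"
  unfolding D_cong_def by (drule D_ideal_uminus) (simp add: algebra_simps)

lemma D_cong_diff: "D_cong q f f' \<Longrightarrow> D_cong q g g' \<Longrightarrow> D_cong q (\<lambda>z. f z - g z) (\<lambda>z. f' z - g' z)"
  using D_cong_add[OF _ D_cong_uminus, of q f f' g g'] by simp

lemma D_cong_smult: "D_cong q f g \<Longrightarrow> D_cong q (pa_smult c f) (pa_smult c g)"
proof -
  assume "D_cong q f g"
  then have "pa_mult (pa_smult c \<one>\<^bsub>path_alg\<^esub>) (\<lambda>z. f z - g z) \<in> D_ideal q"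
    unfolding D_cong_def by (intro ideal.I_l_closed[OF ideal_D_ideal, simplified] pa_smult_closed PA.one_closed)
  moreover have "pa_smult c \<one>\<^bsub>path_alg\<^esub> = (\<lambda>z. if snd z = [] then c else 0)"
    by (auto simp: pa_smult_def path_alg_one)
  ultimately show ?thesis
    by (simp add: D_cong_def pa_mult_scalar_left pa_smult_def algebra_simps)
qed

lemma D_cong_sum:
  "finite A \<Longrightarrow> (\<And>x. x \<in> A \<Longrightarrow> D_cong q (f x) (g x)) \<Longrightarrow>
     D_cong q (\<lambda>z. \<Sum>x\<in>A. f x z) (\<lambda>z. \<Sum>x\<in>A. g x z)"
  by (induction A rule: finite_induct) (simp_all add: D_cong_refl D_cong_add)

lemma D_cong_mem_D_ideal: "D_cong q f g \<Longrightarrow> g \<in> D_ideal q \<Longrightarrow> f \<in> D_ideal q"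
  unfolding D_cong_def by (drule (1) D_ideal_add) simp

lemma D_cong_length0: "D_cong q f g \<Longrightarrow> f (v, []) = g (v, [])"
  and D_cong_length1: "D_cong q f g \<Longrightarrow> f (v, [x]) = g (v, [x])"
  unfolding D_cong_def by (auto dest: D_ideal_length0 D_ideal_length1)

lemma D_coset_eq_iff:
  assumes "f \<in> carrier path_alg" "g \<in> carrier path_alg"
  shows "D_coset q f = D_coset q g \<longleftrightarrow> D_cong (q::'k::field) f g"
proof -
  interpret abelian_subgroup "D_ideal q" "path_alg :: (path \<Rightarrow> 'k) ring"
    by (rule abelian_subgroup_D_ideal)
  have "f \<in> D_coset q g \<longleftrightarrow> D_cong q f g"
    using a_rcos_module_minus[OF ring_path_alg assms(2,1)] by (simp add: D_cong_def path_alg_minus assms)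
  then show ?thesis
    using a_rcos_self[OF assms(1)] a_repr_independence'[OF _ assms(2)] by metis
qed

lemma D_coset_eq_ideal_iff:
  assumes "f \<in> carrier path_alg"
  shows "D_coset q f = D_ideal q \<longleftrightarrow> f \<in> D_ideal (q::'k::field)"
  using abelian_subgroup.a_rcos_self[OF abelian_subgroup_D_ideal assms]
    abelian_subgroup.a_rcos_const[OF abelian_subgroup_D_ideal]
  by metis

lemma D_alg_carrier:
  "carrier (D_alg q) = D_coset q ` carrier (path_alg :: (path \<Rightarrow> 'k::field) ring)"
  by (auto simp: D_alg_def FactRing_def A_RCOSETS_def')

lemma ring_D_alg: "ring (D_alg (q::'k::field))"
  unfolding D_alg_def by (rule ideal.quotient_is_ring[OF ideal_D_ideal])

lemma D_alg_zero: "\<zero>\<^bsub>D_alg q\<^esub> = D_ideal (q::'k::field)"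
  by (simp add: D_alg_def FactRing_def)

lemma D_coset_hom:
  "D_coset q \<in> ring_hom path_alg (D_alg (q::'k::field))"
  unfolding D_alg_def by (rule ideal.rcos_ring_hom[OF ideal_D_ideal])

section \<open>Lifting a homomorphism of quotients to representatives\<close>

definition right_quot :: "(path \<Rightarrow> 'k::field) \<Rightarrow> arr \<Rightarrow> path \<Rightarrow> 'k" where
  "right_quot f x = (\<lambda>z. f (fst z, snd z @ [x]))"

lemma pa_mult_arrow_right:
  "pa_mult g (arrow x) (v, zs) =
    (if zs \<noteq> [] \<and> last zs = x \<and> end_vtx (v, butlast zs) = src x then g (v, butlast zs) else 0)"
proof -
  have "pa_mult g (arrow x) (v, zs) =
    (\<Sum>k\<le>length zs. if k = length zs - 1 then
        (if zs \<noteq> [] \<and> last zs = x \<and> end_vtx (v, butlast zs) = src x then g (v, butlast zs) else 0)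
      else 0)"
    unfolding pa_mult_apply
    by (rule sum.cong)
      (auto simp: drop_eq_singleton_iff arrow_def basis_path_def butlast_conv_take)
  then show ?thesis
    by simp
qed

lemma right_quot_closed:
  assumes "f \<in> carrier path_alg"
  shows "right_quot f x \<in> carrier path_alg"
proof (rule path_alg_carrierI)
  have "supp (right_quot f x) \<subseteq> (\<lambda>z. (fst z, butlast (snd z))) ` supp f"
    by (auto simp: supp_def right_quot_def intro!: image_eqI[where x = "(fst z, snd z @ [x])" for z])
  then show "finite (supp (right_quot f x))"
    using finite_supp_path_alg[OF assms] by (meson finite_subset finite_imageI)
next
  fix z
  assume "right_quot f x z \<noteq> 0"
  then have "valid_path (fst z, snd z @ [x])"
    using path_alg_carrierD[OF assms] by (simp add: right_quot_def)
  then show "valid_path z"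
    by (simp add: valid_path_def valid_from_append)
qed

lemma arrow_decomposition:
  assumes f: "f \<in> carrier path_alg" and f0: "\<forall>v. f (v, []) = 0"
  shows "f = (\<lambda>z. \<Sum>x\<in>UNIV. pa_mult (right_quot f x) (arrow x) z)"
proof
  fix z :: path
  obtain v zs where z: "z = (v, zs)"
    by (cases z)
  show "f z = (\<Sum>x\<in>UNIV. pa_mult (right_quot f x) (arrow x) z)"
  proof (cases "zs = []")
    case True
    then show ?thesis
      using f0 by (simp add: z pa_mult_arrow_right)
  next
    case False
    then have zs: "zs = butlast zs @ [last zs]"
      by simp
    have "\<not> valid_path (v, zs)" if "end_vtx (v, butlast zs) \<noteq> src (last zs)"
      using that by (subst zs) (simp add: valid_path_def valid_from_append)
    then have "f (v, zs) = (if end_vtx (v, butlast zs) = src (last zs) then f (v, zs) else 0)"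
      using path_alg_carrierD[OF f, of "(v, zs)"] by auto
    also have "\<dots> = (\<Sum>x\<in>UNIV. if x = last zs then
        (if end_vtx (v, butlast zs) = src (last zs) then f (v, zs) else 0) else 0)"
      by simp
    also have "\<dots> = (\<Sum>x\<in>UNIV. pa_mult (right_quot f x) (arrow x) (v, zs))"
      using False by (intro sum.cong) (auto simp: pa_mult_arrow_right right_quot_def)
    finally show ?thesis
      by (simp add: z)
  qed
qed

locale D_hom =
  fixes \<phi> :: "(path \<Rightarrow> 'k::field) set \<Rightarrow> (path \<Rightarrow> 'k) set" and q1 q2 :: 'k
  assumes hom: "\<phi> \<in> ring_hom (D_alg q1) (D_alg q2)"
begin

definition lift :: "(path \<Rightarrow> 'k) \<Rightarrow> path \<Rightarrow> 'k" where
  "lift f = (SOME g. g \<in> carrier path_alg \<and> \<phi> (D_coset q1 f) = D_coset q2 g)"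

lemma lift_closed: "f \<in> carrier path_alg \<Longrightarrow> lift f \<in> carrier path_alg"
  and lift_coset: "f \<in> carrier path_alg \<Longrightarrow> \<phi> (D_coset q1 f) = D_coset q2 (lift f)"
proof -
  assume "f \<in> carrier path_alg"
  then have "\<phi> (D_coset q1 f) \<in> carrier (D_alg q2)"
    by (intro ring_hom_closed[OF hom]) (simp add: D_alg_carrier)
  then have "\<exists>g. g \<in> carrier path_alg \<and> \<phi> (D_coset q1 f) = D_coset q2 g"
    by (auto simp: D_alg_carrier)
  then have "lift f \<in> carrier path_alg \<and> \<phi> (D_coset q1 f) = D_coset q2 (lift f)"
    unfolding lift_def by (rule someI_ex)
  then show "lift f \<in> carrier path_alg" "\<phi> (D_coset q1 f) = D_coset q2 (lift f)"
    by simp_all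
qed

lemma D_cong_lift_iff:
  "f \<in> carrier path_alg \<Longrightarrow> g \<in> carrier path_alg \<Longrightarrow>
     D_cong q2 (lift f) g \<longleftrightarrow> \<phi> (D_coset q1 f) = D_coset q2 g"
  by (simp add: lift_coset lift_closed D_coset_eq_iff)

lemma lift_mult:
  assumes "f \<in> carrier path_alg" "g \<in> carrier path_alg"
  shows "D_cong q2 (lift (pa_mult f g)) (pa_mult (lift f) (lift g))"
proof -
  have "\<phi> (D_coset q1 (pa_mult f g)) = \<phi> (D_coset q1 f \<otimes>\<^bsub>D_alg q1\<^esub> D_coset q1 g)"
    using ring_hom_mult[OF D_coset_hom assms] by simp
  also have "\<dots> = D_coset q2 (lift f) \<otimes>\<^bsub>D_alg q2\<^esub> D_coset q2 (lift g)"
    using assms by (simp add: ring_hom_mult[OF hom] D_alg_carrier lift_coset)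
  also have "\<dots> = D_coset q2 (pa_mult (lift f) (lift g))"
    using ring_hom_mult[OF D_coset_hom lift_closed lift_closed] assms by simp
  finally show ?thesis
    using assms by (simp add: D_cong_lift_iff pa_mult_closed lift_closed)
qed

lemma lift_add:
  assumes "f \<in> carrier path_alg" "g \<in> carrier path_alg"
  shows "D_cong q2 (lift (\<lambda>z. f z + g z)) (\<lambda>z. lift f z + lift g z)"
proof -
  have "\<phi> (D_coset q1 (\<lambda>z. f z + g z)) = \<phi> (D_coset q1 f \<oplus>\<^bsub>D_alg q1\<^esub> D_coset q1 g)"
    using ring_hom_add[OF D_coset_hom assms] by simp
  also have "\<dots> = D_coset q2 (lift f) \<oplus>\<^bsub>D_alg q2\<^esub> D_coset q2 (lift g)"
    using assms by (simp add: ring_hom_add[OF hom] D_alg_carrier lift_coset)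
  also have "\<dots> = D_coset q2 (\<lambda>z. lift f z + lift g z)"
    using ring_hom_add[OF D_coset_hom lift_closed lift_closed] assms by simp
  finally show ?thesis
    using assms by (simp add: D_cong_lift_iff add_closed_path_alg lift_closed)
qed

lemma lift_one: "D_cong q2 (lift \<one>\<^bsub>path_alg\<^esub>) \<one>\<^bsub>path_alg\<^esub>"
proof -
  have "\<phi> (D_coset q1 \<one>\<^bsub>path_alg\<^esub>) = D_coset q2 \<one>\<^bsub>path_alg\<^esub>"
    using ring_hom_one[OF hom] ring_hom_one[OF D_coset_hom] by metis
  then show ?thesis
    by (simp add: D_cong_lift_iff)
qed

lemma lift_mem_D_ideal:
  assumes "f \<in> D_ideal q1"
  shows "lift f \<in> D_ideal q2"
proof -
  have f: "f \<in> carrier path_alg"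
    using assms D_ideal_subset by blast
  have "D_coset q2 (lift f) = \<phi> (D_coset q1 f)"
    by (simp add: lift_coset f)
  also have "D_coset q1 f = D_ideal q1"
    using assms f by (simp add: D_coset_eq_ideal_iff)
  also have "\<phi> (D_ideal q1) = D_ideal q2"
    using ring_hom_zero[OF hom ring_D_alg ring_D_alg] by (simp add: D_alg_zero)
  finally show ?thesis
    by (simp add: D_coset_eq_ideal_iff lift_closed f)
qed

lemma lift_uminus:
  assumes "f \<in> carrier path_alg"
  shows "D_cong q2 (lift (\<lambda>z. - f z)) (\<lambda>z. - lift f z)"
proof -
  have "D_cong q2 (lift (\<lambda>z. f z + - f z)) (\<lambda>z. lift f z + lift (\<lambda>z. - f z) z)"
    by (rule lift_add[OF assms uminus_closed_path_alg[OF assms]])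
  moreover have "lift (\<lambda>z. f z + - f z) \<in> D_ideal q2"
    using lift_mem_D_ideal[OF D_ideal_zero] by simp
  ultimately have "(\<lambda>z. lift f z + lift (\<lambda>z. - f z) z) \<in> D_ideal q2"
    by (rule D_cong_mem_D_ideal[OF D_cong_sym])
  then show ?thesis
    by (simp add: D_cong_def add.commute)
qed

lemma lift_diff:
  assumes "f \<in> carrier path_alg" "g \<in> carrier path_alg"
  shows "D_cong q2 (lift (\<lambda>z. f z - g z)) (\<lambda>z. lift f z - lift g z)"
  using D_cong_trans[OF lift_add[OF assms(1) uminus_closed_path_alg[OF assms(2)]]
      D_cong_add[OF D_cong_refl lift_uminus[OF assms(2)]]]
  by simp

lemma lift_sum:
  assumes "finite A" "\<And>x. x \<in> A \<Longrightarrow> g x \<in> carrier path_alg"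
  shows "D_cong q2 (lift (\<lambda>z. \<Sum>x\<in>A. g x z)) (\<lambda>z. \<Sum>x\<in>A. lift (g x) z)"
  using assms
proof (induction A rule: finite_induct)
  case empty
  show ?case
    using lift_mem_D_ideal[OF D_ideal_zero] by (simp add: D_cong_def)
next
  case (insert x A)
  then show ?case
    using D_cong_trans[OF lift_add D_cong_add[OF D_cong_refl insert.IH]]
    by (simp add: sum_closed_path_alg)
qed

lemma lift_arrow_length0: "lift (arrow x) (v, []) = 0"
proof -
  let ?e = "lift (vertex (src x)) (v, [])" and ?a = "lift (arrow x) (v, [])"
  have "?a = ?e * ?a"
    using D_cong_length0[OF lift_mult[OF vertex_closed[of "src x"] arrow_closed[of x]], of v]
    by (simp only: pa_mult_vertex_arrow pa_mult_length0)
  moreover have "0 = ?a * ?e"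
    using D_cong_length0[OF lift_mult[OF arrow_closed[of x] vertex_closed[of "src x"]], of v]
      D_ideal_length0[OF lift_mem_D_ideal[OF D_ideal_zero], of v]
    by (simp only: pa_mult_arrow_vertex_src pa_mult_length0)
  ultimately show ?thesis
    by (metis mult.commute)
qed

text \<open>\<open>\<phi>\<close> preserves the arrow ideal \<open>J\<close> and its square: decompose along the last arrow.\<close>

lemma lift_length0_eq_0:
  assumes f: "f \<in> carrier path_alg" and f0: "\<forall>v. f (v, []) = 0"
  shows "lift f (v, []) = 0"
proof -
  let ?g = "\<lambda>x. pa_mult (right_quot f x) (arrow x)"
  have g: "?g x \<in> carrier path_alg" for x
    by (simp add: pa_mult_closed right_quot_closed f arrow_closed)
  have "lift f (v, []) = lift (\<lambda>z. \<Sum>x\<in>UNIV. ?g x z) (v, [])"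
    using arrow_decomposition[OF f f0] by (rule arg_cong)
  also have "\<dots> = (\<Sum>x\<in>UNIV. lift (?g x) (v, []))"
    using lift_sum[OF finite_UNIV_arr g] by (rule D_cong_length0)
  also have "\<dots> = 0"
    using D_cong_length0[OF lift_mult[OF right_quot_closed[OF f] arrow_closed]]
    by (simp add: pa_mult_length0 lift_arrow_length0)
  finally show ?thesis .
qed

lemma lift_length1_eq_0:
  assumes f: "f \<in> carrier path_alg" and f0: "\<forall>v. f (v, []) = 0" and f1: "\<forall>v x. f (v, [x]) = 0"
  shows "lift f (v, [y]) = 0"
proof -
  let ?g = "\<lambda>x. pa_mult (right_quot f x) (arrow x)"
  have g: "?g x \<in> carrier path_alg" for x
    by (simp add: pa_mult_closed right_quot_closed f arrow_closed)
  have quot0: "lift (right_quot f x) (w, []) = 0" for x w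
  proof (rule lift_length0_eq_0)
    show "right_quot f x \<in> carrier path_alg"
      by (rule right_quot_closed[OF f])
    show "\<forall>v. right_quot f x (v, []) = 0"
      using f1 by (simp add: right_quot_def)
  qed
  have "lift f (v, [y]) = lift (\<lambda>z. \<Sum>x\<in>UNIV. ?g x z) (v, [y])"
    using arrow_decomposition[OF f f0] by (rule arg_cong)
  also have "\<dots> = (\<Sum>x\<in>UNIV. lift (?g x) (v, [y]))"
    using lift_sum[OF finite_UNIV_arr g] by (rule D_cong_length1)
  also have "\<dots> = 0"
    using D_cong_length1[OF lift_mult[OF right_quot_closed[OF f] arrow_closed]]
    by (simp add: pa_mult_length1 lift_arrow_length0 quot0)
  finally show ?thesis .
qed

definition arrow_coeff :: "arr \<Rightarrow> arr \<Rightarrow> 'k" where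
  "arrow_coeff x y = lift (arrow x) (src y, [y])"

lemma lift_arrow_length1: "lift (arrow x) (v, [y]) = (if v = src y then arrow_coeff x y else 0)"
  using path_alg_carrierD[OF lift_closed[OF arrow_closed], of x "(v, [y])"]
  by (auto simp: arrow_coeff_def valid_path_def)

lemma lift_arrow_mult_length2:
  "pa_mult (lift (arrow x)) (lift (arrow y)) (src u, [u, w]) =
     (if tgt u = src w then arrow_coeff x u * arrow_coeff y w else 0)"
  by (simp add: pa_mult_length2 lift_arrow_length0 lift_arrow_length1)

lemma arrow_coeff_rel1_in_span:
  "\<exists>l m. \<forall>x y. tgt x = src y \<longrightarrow>
     arrow_coeff Aa x * arrow_coeff Bb y - arrow_coeff Aa x * arrow_coeff Dd y
       - arrow_coeff Cc x * arrow_coeff Dd y = l * rel1 (src x, [x, y]) + m * rel2 q2 (src x, [x, y])"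
proof -
  let ?L = "\<lambda>x. lift (arrow x)"
  let ?Z = "\<lambda>z. pa_mult (?L Aa) (?L Bb) z - pa_mult (?L Aa) (?L Dd) z - pa_mult (?L Cc) (?L Dd) z"
  let ?P = "\<lambda>x y. pa_mult (arrow x) (arrow y)"
  have P: "?P x y \<in> carrier path_alg" for x y
    by (simp add: pa_mult_closed arrow_closed)
  have "D_cong q2 (lift rel1) (\<lambda>z. lift (\<lambda>z. ?P Aa Bb z - ?P Aa Dd z) z - lift (?P Cc Dd) z)"
    unfolding rel1_eq by (intro lift_diff diff_closed_path_alg P)
  also have "D_cong q2 \<dots> (\<lambda>z. lift (?P Aa Bb) z - lift (?P Aa Dd) z - lift (?P Cc Dd) z)"
    by (intro D_cong_diff lift_diff D_cong_refl P)
  also have "D_cong q2 \<dots> ?Z"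
    by (intro D_cong_diff lift_mult arrow_closed)
  finally have "?Z \<in> D_ideal q2"
    by (rule D_cong_mem_D_ideal[OF D_cong_sym lift_mem_D_ideal[OF rel1_mem_D_ideal]])
  then obtain l m where "\<forall>v x y. ?Z (v, [x, y]) = l * rel1 (v, [x, y]) + m * rel2 q2 (v, [x, y])"
    using D_ideal_length2 by blast
  then show ?thesis
    by (metis lift_arrow_mult_length2)
qed

end

locale D_iso = D_hom +
  assumes bij: "bij_betw \<phi> (carrier (D_alg q1)) (carrier (D_alg q2))"
    and linear: "\<And>c f g. f \<in> carrier path_alg \<Longrightarrow> g \<in> carrier path_alg \<Longrightarrow>
      \<phi> (D_coset q1 f) = D_coset q2 g \<Longrightarrow> \<phi> (D_coset q1 (pa_smult c f)) = D_coset q2 (pa_smult c g)"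

lemma D_alg_iso_iff: "D_alg_iso q p \<longleftrightarrow> (\<exists>\<phi>. D_iso \<phi> q p)"
  by (auto simp: D_alg_iso_def D_iso_def D_iso_axioms_def D_hom_def ring_iso_def)

sublocale D_iso \<subseteq> inv: D_hom "inv_into (carrier (D_alg q1)) \<phi>" q2 q1
proof
  have "\<phi> \<in> ring_iso (D_alg q1) (D_alg q2)"
    using hom bij by (simp add: ring_iso_def)
  then show "inv_into (carrier (D_alg q1)) \<phi> \<in> ring_hom (D_alg q2) (D_alg q1)"
    using ring_iso_set_sym[OF ring_D_alg] unfolding ring_iso_def by blast
qed

context D_iso
begin

lemma inv_lift_lift:
  assumes f: "f \<in> carrier path_alg"
  shows "D_cong q1 (inv.lift (lift f)) f"
proof -
  have "D_coset q1 (inv.lift (lift f)) = inv_into (carrier (D_alg q1)) \<phi> (\<phi> (D_coset q1 f))"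
    by (simp add: inv.lift_coset lift_coset lift_closed f)
  also have "\<dots> = D_coset q1 f"
    using bij f by (simp add: bij_betw_def D_alg_carrier)
  finally show ?thesis
    by (simp add: D_coset_eq_iff inv.lift_closed lift_closed f)
qed

lemma lift_smult:
  assumes f: "f \<in> carrier path_alg"
  shows "D_cong q2 (lift (pa_smult c f)) (pa_smult c (lift f))"
  using linear[OF f lift_closed[OF f] lift_coset[OF f]]
  by (simp add: D_cong_lift_iff pa_smult_closed lift_closed f)

lemma arrow_coeff_rel2_in_span:
  "\<exists>l m. \<forall>x y. tgt x = src y \<longrightarrow>
     arrow_coeff Bb x * arrow_coeff Aa y - q1 * (arrow_coeff Dd x * arrow_coeff Cc y)
       = l * rel1 (src x, [x, y]) + m * rel2 q2 (src x, [x, y])"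
proof -
  let ?L = "\<lambda>x. lift (arrow x)"
  let ?Z = "\<lambda>z. pa_mult (?L Bb) (?L Aa) z - pa_smult q1 (pa_mult (?L Dd) (?L Cc)) z"
  have "D_cong q2 (lift (rel2 q1))
      (\<lambda>z. lift (pa_mult (arrow Bb) (arrow Aa)) z - lift (pa_smult q1 (pa_mult (arrow Dd) (arrow Cc))) z)"
    unfolding rel2_eq by (rule lift_diff) (simp_all add: pa_mult_closed pa_smult_closed arrow_closed)
  also have "D_cong q2 \<dots> (\<lambda>z. pa_mult (?L Bb) (?L Aa) z
      - pa_smult q1 (lift (pa_mult (arrow Dd) (arrow Cc))) z)"
    by (intro D_cong_diff lift_mult lift_smult arrow_closed pa_mult_closed)
  also have "D_cong q2 \<dots> ?Z"
    by (intro D_cong_diff D_cong_refl D_cong_smult lift_mult arrow_closed)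
  finally have "?Z \<in> D_ideal q2"
    by (rule D_cong_mem_D_ideal[OF D_cong_sym lift_mem_D_ideal[OF rel2_mem_D_ideal]])
  then obtain l m where "\<forall>v x y. ?Z (v, [x, y]) = l * rel1 (v, [x, y]) + m * rel2 q2 (v, [x, y])"
    using D_ideal_length2 by blast
  then show ?thesis
    by (metis lift_arrow_mult_length2 pa_smult_def mult_zero_right)
qed

definition vertex_coeff where
  "vertex_coeff u w = lift (vertex u) (w, [])"

lemma vertex_coeff_cases:
  "(\<forall>u w. vertex_coeff u w = (if w = u then 1 else 0)) \<or>
   (\<forall>u w. vertex_coeff u w = (if w = u then 0 else 1))"
proof -
  have idem: "vertex_coeff u w = 0 \<or> vertex_coeff u w = 1" for u w
  proof -
    have "vertex_coeff u w = vertex_coeff u w * vertex_coeff u w"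
      using D_cong_length0[OF lift_mult[OF vertex_closed vertex_closed], of u u w]
      by (simp add: pa_mult_vertex_vertex pa_mult_length0 vertex_coeff_def)
    then show ?thesis
      by (metis mult_cancel_left1 mult_zero_right)
  qed
  have sum: "vertex_coeff E1 w + vertex_coeff E2 w = 1" for w
    using D_cong_length0[OF lift_add[OF vertex_closed vertex_closed], of E1 E2 w]
      D_cong_length0[OF lift_one, of w]
    by (simp add: vertex_coeff_def vertex_sum path_alg_one)
  have nonzero: "vertex_coeff u E1 \<noteq> 0 \<or> vertex_coeff u E2 \<noteq> 0" for u
  proof (rule ccontr)
    assume "\<not> ?thesis"
    then have "\<forall>w. lift (vertex u) (w, []) = 0"
      by (metis vertex_coeff_def vtx.exhaust)
    then have "inv.lift (lift (vertex u)) (u, []) = 0"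
      by (intro inv.lift_length0_eq_0 lift_closed vertex_closed)
    moreover have "inv.lift (lift (vertex u)) (u, []) = 1"
      using D_cong_length0[OF inv_lift_lift[OF vertex_closed]] by (simp add: vertex_def basis_path_def)
    ultimately show False
      by simp
  qed
  show ?thesis
    using idem sum[of E1] sum[of E2] nonzero[of E1] nonzero[of E2]
    by (smt (verit) add_cancel_left_left add_cancel_left_right one_neq_zero vtx.exhaust)
qed

lemma arrow_coeff_nonzero_imp_vertex_coeff_nonzero:
  assumes "arrow_coeff x y \<noteq> 0"
  shows "vertex_coeff (src x) (src y) \<noteq> 0"
  using assms D_cong_length1[OF lift_mult[OF vertex_closed arrow_closed], of "src x" x "src y" y]
  by (simp add: pa_mult_vertex_arrow pa_mult_length1 lift_arrow_length0 vertex_coeff_def arrow_coeff_def)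

text \<open>The arrows stay linearly independent modulo \<open>J\<^sup>2\<close>: otherwise the inverse would map a
  nonzero element of \<open>J/J\<^sup>2\<close> to zero.\<close>

lemma arrow_coeff_independent:
  assumes "\<And>y. (\<Sum>x\<in>UNIV. t x * arrow_coeff x y) = 0"
  shows "t x = 0"
proof -
  define f where "f = (\<lambda>z. \<Sum>x\<in>UNIV. pa_smult (t x) (arrow x) z)"
  have f: "f \<in> carrier path_alg"
    unfolding f_def by (intro sum_closed_path_alg pa_smult_closed arrow_closed) simp
  have "D_cong q2 (lift f) (\<lambda>z. \<Sum>x\<in>UNIV. lift (pa_smult (t x) (arrow x)) z)"
    unfolding f_def by (intro lift_sum pa_smult_closed arrow_closed) simp
  also have "D_cong q2 \<dots> (\<lambda>z. \<Sum>x\<in>UNIV. pa_smult (t x) (lift (arrow x)) z)"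
    by (intro D_cong_sum lift_smult arrow_closed) simp
  finally have lift_f: "D_cong q2 (lift f) (\<lambda>z. \<Sum>x\<in>UNIV. t x * lift (arrow x) z)"
    by (simp add: pa_smult_def)
  have "lift f (v, [y]) = (if v = src y then (\<Sum>x\<in>UNIV. t x * arrow_coeff x y) else 0)" for v y
    using D_cong_length1[OF lift_f] by (simp add: lift_arrow_length1)
  then have "\<forall>v. lift f (v, []) = 0" "\<forall>v y. lift f (v, [y]) = 0"
    using D_cong_length0[OF lift_f] assms by (simp_all add: lift_arrow_length0)
  then have "inv.lift (lift f) (src x, [x]) = 0"
    by (intro inv.lift_length1_eq_0 lift_closed f) simp_all
  moreover have "f (src x, [x]) = (\<Sum>x'\<in>UNIV. if x' = x then t x' else 0)"
    unfolding f_def pa_smult_def arrow_length1 by (intro sum.cong) auto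
  ultimately show ?thesis
    using D_cong_length1[OF inv_lift_lift[OF f]] by simp
qed

lemma arrow_coeff_det_nonzero:
  assumes "x1 \<noteq> x2"
    and "\<And>x y. x \<in> {x1, x2} \<Longrightarrow> arrow_coeff x y \<noteq> 0 \<Longrightarrow> y = y1 \<or> y = y2"
  shows "arrow_coeff x1 y1 * arrow_coeff x2 y2 - arrow_coeff x1 y2 * arrow_coeff x2 y1 \<noteq> 0"
proof
  assume "arrow_coeff x1 y1 * arrow_coeff x2 y2 - arrow_coeff x1 y2 * arrow_coeff x2 y1 = 0"
  then obtain s t where st: "s \<noteq> 0 \<or> t \<noteq> 0"
    "s * arrow_coeff x1 y1 + t * arrow_coeff x2 y1 = 0" "s * arrow_coeff x1 y2 + t * arrow_coeff x2 y2 = 0"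
    by (rule singular_2x2_left_kernel)
  define u where "u x = (if x = x1 then s else if x = x2 then t else 0)" for x
  have "(\<Sum>x\<in>UNIV. u x * arrow_coeff x y) = 0" for y
  proof -
    have "(\<Sum>x\<in>UNIV. u x * arrow_coeff x y) = s * arrow_coeff x1 y + t * arrow_coeff x2 y"
      using \<open>x1 \<noteq> x2\<close> by (subst sum.mono_neutral_right[of UNIV "{x1, x2}"]) (auto simp: u_def)
    also have "\<dots> = 0"
    proof -
      have "arrow_coeff x y = 0" if "x \<in> {x1, x2}" "y \<noteq> y1" "y \<noteq> y2" for x
        using assms(2) that by blast
      then show ?thesis
        using st(2,3) by (cases "y = y1"; cases "y = y2") auto
    qed
    finally show ?thesis .
  qed
  then have "u x1 = 0" "u x2 = 0"
    by (blast intro: arrow_coeff_independent)+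
  then show False
    using st(1) \<open>x1 \<noteq> x2\<close> by (simp add: u_def)
qed

lemma params_eq_or_inverse: "q2 = q1 \<or> q2 * q1 = 1"
proof -
  obtain l m where r1: "\<And>x y. tgt x = src y \<Longrightarrow>
     arrow_coeff Aa x * arrow_coeff Bb y - arrow_coeff Aa x * arrow_coeff Dd y
       - arrow_coeff Cc x * arrow_coeff Dd y = l * rel1 (src x, [x, y]) + m * rel2 q2 (src x, [x, y])"
    using arrow_coeff_rel1_in_span by blast
  obtain l' m' where r2: "\<And>x y. tgt x = src y \<Longrightarrow>
     arrow_coeff Bb x * arrow_coeff Aa y - q1 * (arrow_coeff Dd x * arrow_coeff Cc y)
       = l' * rel1 (src x, [x, y]) + m' * rel2 q2 (src x, [x, y])"
    using arrow_coeff_rel2_in_span by blast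
  from vertex_coeff_cases show ?thesis
  proof
    assume "\<forall>u w. vertex_coeff u w = (if w = u then 1 else 0)"
    then have supp: "arrow_coeff x y \<noteq> 0 \<Longrightarrow> src y = src x" for x y
      using arrow_coeff_nonzero_imp_vertex_coeff_nonzero[of x y] by (simp split: if_splits)
    have "arrow_coeff Aa Aa * arrow_coeff Cc Cc - arrow_coeff Aa Cc * arrow_coeff Cc Aa \<noteq> 0"
      by (rule arrow_coeff_det_nonzero) (auto dest!: supp simp: src_eq_E1_iff src_eq_E2_iff)
    moreover have "arrow_coeff Bb Bb * arrow_coeff Dd Dd - arrow_coeff Bb Dd * arrow_coeff Dd Bb \<noteq> 0"
      by (rule arrow_coeff_det_nonzero) (auto dest!: supp simp: src_eq_E1_iff src_eq_E2_iff)
    ultimately show ?thesis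
      by (rule transformed_relations_determine_parameter[where l = l and m = m'])
        (simp add: r1 r2 rel1_def rel2_def)
  next
    assume "\<forall>u w. vertex_coeff u w = (if w = u then 0 else 1)"
    then have supp: "arrow_coeff x y \<noteq> 0 \<Longrightarrow> src y = tgt x" for x y
      using arrow_coeff_nonzero_imp_vertex_coeff_nonzero[of x y] by (cases x; cases y) (simp_all split: if_splits)
    have "arrow_coeff Aa Bb * arrow_coeff Cc Dd - arrow_coeff Aa Dd * arrow_coeff Cc Bb \<noteq> 0"
      by (rule arrow_coeff_det_nonzero) (auto dest!: supp simp: src_eq_E1_iff src_eq_E2_iff)
    moreover have "arrow_coeff Bb Aa * arrow_coeff Dd Cc - arrow_coeff Bb Cc * arrow_coeff Dd Aa \<noteq> 0"
      by (rule arrow_coeff_det_nonzero) (auto dest!: supp simp: src_eq_E1_iff src_eq_E2_iff)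
    ultimately show ?thesis
      by (rule transformed_relations_determine_parameter[where l = l' and m = m])
        (simp add: r1 r2 rel1_def rel2_def)
  qed
qed

end

section \<open>Isomorphisms induced by automorphisms of the path algebra\<close>

lemma ring_hom_maps_D_ideal:
  assumes S: "S \<in> ring_hom path_alg path_alg"
    and rels: "S rel1 \<in> D_ideal p" "S (rel2 q) \<in> D_ideal p"
    and f: "f \<in> D_ideal (q::'k::field)"
  shows "S f \<in> D_ideal p"
proof -
  interpret S: ring_hom_ring path_alg path_alg S
    by (rule ring_hom_ringI2[OF ring_path_alg ring_path_alg S])
  have "D_ideal q \<subseteq> {f \<in> carrier path_alg. S f \<in> D_ideal p}"
    unfolding D_ideal_genideal[of q]
    by (rule PA.genideal_minimal[OF S.ideal_vimage[OF ideal_D_ideal]])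
      (use rels rel1_closed rel2_closed in auto)
  then show ?thesis
    using f by blast
qed

lemma ring_iso_D_alg_induced:
  fixes T T' :: "(path \<Rightarrow> 'k::field) \<Rightarrow> path \<Rightarrow> 'k"
  assumes T: "T \<in> ring_hom path_alg path_alg" and T': "T' \<in> ring_hom path_alg path_alg"
    and inv: "\<And>f. f \<in> carrier path_alg \<Longrightarrow> T' (T f) = f" "\<And>f. f \<in> carrier path_alg \<Longrightarrow> T (T' f) = f"
    and maps: "\<And>f. f \<in> D_ideal q \<Longrightarrow> T f \<in> D_ideal p" "\<And>f. f \<in> D_ideal p \<Longrightarrow> T' f \<in> D_ideal q"
  defines "h \<equiv> \<lambda>f. D_coset p (T f)"
  shows "(\<lambda>X. the_elem (h ` X)) \<in> ring_iso (D_alg q) (D_alg p)"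
    and "f \<in> carrier path_alg \<Longrightarrow> the_elem (h ` D_coset q f) = D_coset p (T f)"
proof -
  have T_closed: "T f \<in> carrier path_alg" and T'_closed: "T' f \<in> carrier path_alg"
    if "f \<in> carrier path_alg" for f
    using that ring_hom_closed[OF T] ring_hom_closed[OF T'] by auto
  have h: "h \<in> ring_hom path_alg (D_alg p)"
    using ring_hom_trans[OF T D_coset_hom] by (simp add: h_def comp_def)
  interpret h: ring_hom_ring path_alg "D_alg p" h
    by (rule ring_hom_ringI2[OF ring_path_alg ring_D_alg h])
  have "a_kernel path_alg (D_alg p) h = {f \<in> carrier path_alg. T f \<in> D_ideal p}"
    unfolding a_kernel_def' h_def D_alg_zero using D_coset_eq_ideal_iff[OF T_closed] by blast
  also have "\<dots> = D_ideal q"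
    using maps inv(1) D_ideal_subset by force
  finally have ker: "a_kernel path_alg (D_alg p) h = D_ideal q" .
  have "carrier (D_alg p) \<subseteq> h ` carrier path_alg"
  proof
    fix X
    assume "X \<in> carrier (D_alg p)"
    then obtain g where "g \<in> carrier path_alg" "X = D_coset p g"
      by (auto simp: D_alg_carrier)
    then show "X \<in> h ` carrier path_alg"
      using inv(2) T'_closed by (force simp: h_def)
  qed
  then have "h ` carrier path_alg = carrier (D_alg p)"
    using ring_hom_closed[OF h] by blast
  then show "(\<lambda>X. the_elem (h ` X)) \<in> ring_iso (D_alg q) (D_alg p)"
    by (rule h.FactRing_iso_set[unfolded ker D_alg_def[of q, symmetric]])
  show "the_elem (h ` D_coset q f) = D_coset p (T f)" if "f \<in> carrier path_alg"
    using h.the_elem_simp[OF that, unfolded ker] by (simp add: h_def)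
qed

lemma D_alg_isoI:
  fixes T T' :: "(path \<Rightarrow> 'k::field) \<Rightarrow> path \<Rightarrow> 'k"
  assumes T: "T \<in> ring_hom path_alg path_alg" and T': "T' \<in> ring_hom path_alg path_alg"
    and inv: "\<And>f. f \<in> carrier path_alg \<Longrightarrow> T' (T f) = f" "\<And>f. f \<in> carrier path_alg \<Longrightarrow> T (T' f) = f"
    and smult: "\<And>c f. f \<in> carrier path_alg \<Longrightarrow> T (pa_smult c f) = pa_smult c (T f)"
    and rels: "T rel1 \<in> D_ideal p" "T (rel2 q) \<in> D_ideal p" "T' rel1 \<in> D_ideal q" "T' (rel2 p) \<in> D_ideal q"
  shows "D_alg_iso q p"
proof -
  let ?\<phi> = "\<lambda>X. the_elem ((\<lambda>f. D_coset p (T f)) ` X)"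
  note induced = ring_iso_D_alg_induced[OF T T' inv ring_hom_maps_D_ideal[OF T rels(1,2)]
      ring_hom_maps_D_ideal[OF T' rels(3,4)]]
  have T_closed: "T f \<in> carrier path_alg" if "f \<in> carrier path_alg" for f
    using that ring_hom_closed[OF T] by auto
  have "?\<phi> (D_coset q (pa_smult c f)) = D_coset p (pa_smult c g)"
    if f: "f \<in> carrier path_alg" and g: "g \<in> carrier path_alg" and "?\<phi> (D_coset q f) = D_coset p g"
    for c f g
  proof -
    have "D_cong p (T f) g"
      using that by (simp add: induced(2) D_coset_eq_iff T_closed)
    then show ?thesis
      using f g by (simp add: induced(2) smult D_coset_eq_iff D_cong_smult pa_smult_closed T_closed)
  qed
  then show ?thesis
    unfolding D_alg_iso_def using induced(1) by blast
qed

lemma D_alg_iso_refl: "D_alg_iso q (q::'k::field)"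
  by (rule D_alg_isoI[where T = id and T' = id]) (simp_all add: rel1_mem_D_ideal rel2_mem_D_ideal)

definition swap_vtx :: "vtx \<Rightarrow> vtx" where
  "swap_vtx v = (case v of E1 \<Rightarrow> E2 | E2 \<Rightarrow> E1)"

lemma swap_vtx_simps [simp]: "swap_vtx E1 = E2" "swap_vtx E2 = E1" "swap_vtx (swap_vtx v) = v"
  by (simp_all add: swap_vtx_def split: vtx.split)

fun subst_coeff :: "(arr \<Rightarrow> arr \<Rightarrow> 'k::field) \<Rightarrow> arr list \<Rightarrow> arr list \<Rightarrow> 'k" where
  "subst_coeff m [] [] = 1"
| "subst_coeff m (x # xs) (y # ys) = m x y * subst_coeff m xs ys"
| "subst_coeff m _ _ = 0"

definition swaps_vertices :: "(arr \<Rightarrow> arr \<Rightarrow> 'k::field) \<Rightarrow> bool" where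
  "swaps_vertices m \<longleftrightarrow> (\<forall>x y. m x y \<noteq> 0 \<longrightarrow> src y = swap_vtx (src x) \<and> tgt y = swap_vtx (tgt x))"

text \<open>On coefficients, the algebra endomorphism of \<open>kQ\<close> with \<open>e\<^sub>v \<mapsto> e\<^bsub>swap v\<^esub>\<close> and
  \<open>x \<mapsto> \<Sum>\<^sub>y m x y \<cdot> y\<close> for every arrow \<open>x\<close>.\<close>

definition arrow_subst :: "(arr \<Rightarrow> arr \<Rightarrow> 'k::field) \<Rightarrow> (path \<Rightarrow> 'k) \<Rightarrow> path \<Rightarrow> 'k" where
  "arrow_subst m f = (\<lambda>(w, ys). \<Sum>xs | length xs = length ys. f (swap_vtx w, xs) * subst_coeff m xs ys)"

lemma arrow_subst_apply:
  "arrow_subst m f (w, ys) = (\<Sum>xs | length xs = length ys. f (swap_vtx w, xs) * subst_coeff m xs ys)"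
  by (simp add: arrow_subst_def)

lemma subst_coeff_length: "subst_coeff m xs ys \<noteq> 0 \<Longrightarrow> length xs = length ys"
  by (induction m xs ys rule: subst_coeff.induct) auto

lemma subst_coeff_append:
  "length us = length zs \<Longrightarrow> subst_coeff m (us @ vs) (zs @ ws) = subst_coeff m us zs * subst_coeff m vs ws"
  by (induction m us zs rule: subst_coeff.induct) auto

lemma subst_coeff_last:
  "subst_coeff m us zs \<noteq> 0 \<Longrightarrow> us \<noteq> [] \<Longrightarrow> zs \<noteq> [] \<and> m (last us) (last zs) \<noteq> 0"
proof (induction m us zs rule: subst_coeff.induct)
  case (2 m x xs y ys)
  then show ?case
    by (cases xs; cases ys) auto
qed auto

lemma end_vtx_subst:
  assumes "swaps_vertices m" "subst_coeff m us zs \<noteq> 0"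
  shows "end_vtx (swap_vtx w, us) = swap_vtx (end_vtx (w, zs))"
proof (cases "us = []")
  case True
  then show ?thesis
    using subst_coeff_length[OF assms(2)] by simp
next
  case False
  then show ?thesis
    using subst_coeff_last[OF assms(2)] assms(1) by (auto simp: end_vtx_def swaps_vertices_def)
qed

lemma valid_from_subst:
  "swaps_vertices m \<Longrightarrow> subst_coeff m xs ys \<noteq> 0 \<Longrightarrow> valid_from (swap_vtx w) xs \<Longrightarrow> valid_from w ys"
proof (induction m xs ys arbitrary: w rule: subst_coeff.induct)
  case (2 m x xs y ys)
  then have "src y = swap_vtx (src x)" "tgt y = swap_vtx (tgt x)"
    by (auto simp: swaps_vertices_def)
  with 2 show ?case
    by (metis mult_eq_0_iff subst_coeff.simps(2) swap_vtx_simps(3) valid_from.simps(2))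
qed auto

lemma arrow_subst_closed:
  assumes m: "swaps_vertices m" and f: "f \<in> carrier path_alg"
  shows "arrow_subst m f \<in> carrier path_alg"
proof (rule path_alg_carrierI)
  have "supp (arrow_subst m f) \<subseteq> (\<Union>p\<in>supp f. Pair (swap_vtx (fst p)) ` {ys. length ys = length (snd p)})"
  proof
    fix z
    assume "z \<in> supp (arrow_subst m f)"
    then obtain w ys where z: "z = (w, ys)" and "arrow_subst m f (w, ys) \<noteq> 0"
      by (cases z) (auto simp: supp_def)
    then obtain xs where "xs \<in> {xs. length xs = length ys}" "f (swap_vtx w, xs) * subst_coeff m xs ys \<noteq> 0"
      unfolding arrow_subst_apply using sum.not_neutral_contains_not_neutral by blast
    then have "(swap_vtx w, xs) \<in> supp f"
      "z \<in> Pair (swap_vtx (fst (swap_vtx w, xs))) ` {ys. length ys = length (snd (swap_vtx w, xs))}"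
      by (auto simp: z supp_def)
    then show "z \<in> (\<Union>p\<in>supp f. Pair (swap_vtx (fst p)) ` {ys. length ys = length (snd p)})"
      by (rule UN_I)
  qed
  then show "finite (supp (arrow_subst m f))"
    by (rule finite_subset) (simp add: finite_supp_path_alg[OF f] finite_lists_length_UNIV)
next
  fix z
  assume nz: "arrow_subst m f z \<noteq> 0"
  obtain w ys where z: "z = (w, ys)"
    by (cases z)
  obtain xs where "f (swap_vtx w, xs) * subst_coeff m xs ys \<noteq> 0"
    using nz unfolding z arrow_subst_apply using sum.not_neutral_contains_not_neutral by blast
  then have "valid_path (swap_vtx w, xs)" "subst_coeff m xs ys \<noteq> 0"
    using path_alg_carrierD[OF f] by auto
  then show "valid_path z"
    using valid_from_subst[OF m] by (simp add: z valid_path_def)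
qed

lemma arrow_subst_mult:
  assumes m: "swaps_vertices m"
  shows "arrow_subst m (pa_mult f g) = pa_mult (arrow_subst m f) (arrow_subst m g)"
proof
  fix z :: path
  obtain w ys where z: "z = (w, ys)"
    by (cases z)
  let ?n = "length ys"
  let ?e = "\<lambda>k. end_vtx (w, take k ys)"
  have split: "(\<Sum>xs | length xs = ?n.
        f (swap_vtx w, take k xs) * g (end_vtx (swap_vtx w, take k xs), drop k xs) * subst_coeff m xs ys)
      = (\<Sum>us | length us = k. f (swap_vtx w, us) * subst_coeff m us (take k ys)) *
        (\<Sum>vs | length vs = ?n - k. g (swap_vtx (?e k), vs) * subst_coeff m vs (drop k ys))"
    if k: "k \<le> ?n" for k
  proof -
    have pointwise: "f (swap_vtx w, take k (us @ vs)) * g (end_vtx (swap_vtx w, take k (us @ vs)), drop k (us @ vs))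
          * subst_coeff m (us @ vs) ys
        = (f (swap_vtx w, us) * subst_coeff m us (take k ys)) *
          (g (swap_vtx (?e k), vs) * subst_coeff m vs (drop k ys))"
      if "length us = k" for us vs
      using that k subst_coeff_append[of us "take k ys" m vs "drop k ys"] end_vtx_subst[OF m, of us]
      by (cases "subst_coeff m us (take k ys) = 0") (simp_all add: ac_simps)
    show ?thesis
      unfolding sum_lists_length_append[OF finite_UNIV_arr k] sum_product
      by (intro sum.cong refl pointwise) simp
  qed
  have "arrow_subst m (pa_mult f g) (w, ys) =
     (\<Sum>xs | length xs = ?n. \<Sum>k\<le>?n.
        f (swap_vtx w, take k xs) * g (end_vtx (swap_vtx w, take k xs), drop k xs) * subst_coeff m xs ys)"
    unfolding arrow_subst_apply by (intro sum.cong refl) (simp add: pa_mult_apply sum_distrib_right)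
  also have "\<dots> = (\<Sum>k\<le>?n. \<Sum>xs | length xs = ?n.
        f (swap_vtx w, take k xs) * g (end_vtx (swap_vtx w, take k xs), drop k xs) * subst_coeff m xs ys)"
    by (rule sum.swap)
  also have "\<dots> = pa_mult (arrow_subst m f) (arrow_subst m g) (w, ys)"
    unfolding pa_mult_apply arrow_subst_apply by (intro sum.cong refl) (simp add: split min_def)
  finally show "arrow_subst m (pa_mult f g) z = pa_mult (arrow_subst m f) (arrow_subst m g) z"
    by (simp add: z)
qed

lemma arrow_subst_add: "arrow_subst m (\<lambda>z. f z + g z) = (\<lambda>z. arrow_subst m f z + arrow_subst m g z)"
  by (simp add: arrow_subst_def distrib_right sum.distrib split_def)

lemma arrow_subst_smult: "arrow_subst m (pa_smult c f) = pa_smult c (arrow_subst m f)"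
  by (simp add: arrow_subst_def pa_smult_def sum_distrib_left mult.assoc split_def)

lemma arrow_subst_one: "arrow_subst m \<one>\<^bsub>path_alg\<^esub> = \<one>\<^bsub>path_alg\<^esub>"
proof
  fix z :: path
  obtain w ys where z: "z = (w, ys)"
    by (cases z)
  show "arrow_subst m \<one>\<^bsub>path_alg\<^esub> z = \<one>\<^bsub>path_alg\<^esub> z"
    by (cases ys) (auto simp: z arrow_subst_apply path_alg_one intro!: sum.neutral)
qed

lemma arrow_subst_hom:
  "swaps_vertices m \<Longrightarrow> arrow_subst m \<in> ring_hom path_alg (path_alg :: (path \<Rightarrow> 'k::field) ring)"
  by (rule ring_hom_memI) (simp_all add: arrow_subst_closed arrow_subst_mult arrow_subst_add arrow_subst_one)

lemma subst_coeff_inverse: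
  assumes I: "\<And>z y. (\<Sum>x\<in>UNIV. m z x * m' x y) = (if z = y then 1 else 0)"
  shows "length zs = n \<Longrightarrow> length ys = n \<Longrightarrow>
    (\<Sum>xs | length xs = n. subst_coeff m zs xs * subst_coeff m' xs ys) = (if zs = ys then 1 else 0)"
proof (induction n arbitrary: zs ys)
  case 0
  then show ?case
    by simp
next
  case (Suc n)
  then obtain z zs' y ys' where zs: "zs = z # zs'" "length zs' = n" and ys: "ys = y # ys'" "length ys' = n"
    by (auto simp: length_Suc_conv)
  have "(\<Sum>xs | length xs = Suc n. subst_coeff m zs xs * subst_coeff m' xs ys)
      = (\<Sum>x\<in>UNIV. m z x * m' x y * (\<Sum>xs | length xs = n. subst_coeff m zs' xs * subst_coeff m' xs ys'))"
    unfolding sum_lists_length_Suc[OF finite_UNIV_arr] zs ys by (simp add: sum_distrib_left ac_simps)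
  also have "\<dots> = (\<Sum>x\<in>UNIV. m z x * m' x y) * (if zs' = ys' then 1 else 0)"
    by (simp add: Suc.IH zs ys sum_distrib_right)
  finally show ?case
    using I by (simp add: zs ys)
qed

lemma arrow_subst_inverse:
  assumes I: "\<And>z y. (\<Sum>x\<in>UNIV. m z x * m' x y) = (if z = y then 1 else 0)"
  shows "arrow_subst m' (arrow_subst m f) = f"
proof
  fix z :: path
  obtain w ys where z: "z = (w, ys)"
    by (cases z)
  let ?L = "{xs :: arr list. length xs = length ys}"
  have "arrow_subst m' (arrow_subst m f) (w, ys) =
      (\<Sum>xs\<in>?L. (\<Sum>zs\<in>?L. f (w, zs) * subst_coeff m zs xs) * subst_coeff m' xs ys)"
    unfolding arrow_subst_apply by (intro sum.cong refl) (simp add: arrow_subst_apply)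
  also have "\<dots> = (\<Sum>zs\<in>?L. f (w, zs) * (\<Sum>xs\<in>?L. subst_coeff m zs xs * subst_coeff m' xs ys))"
    by (simp add: sum_distrib_right sum_distrib_left mult.assoc) (rule sum.swap)
  also have "\<dots> = (\<Sum>zs\<in>?L. if zs = ys then f (w, zs) else 0)"
    by (intro sum.cong refl) (simp add: subst_coeff_inverse[OF I])
  also have "\<dots> = f (w, ys)"
    by (simp add: finite_lists_length_UNIV)
  finally show "arrow_subst m' (arrow_subst m f) z = f z"
    by (simp add: z)
qed

lemma arrow_subst_eqI_length2:
  assumes f: "\<And>v xs. length xs \<noteq> 2 \<Longrightarrow> f (v, xs) = 0" and g: "\<And>v xs. length xs \<noteq> 2 \<Longrightarrow> g (v, xs) = 0"
    and fg: "\<And>w y1 y2. (\<Sum>x1\<in>UNIV. \<Sum>x2\<in>UNIV. f (swap_vtx w, [x1, x2]) * (m x1 y1 * m x2 y2)) = g (w, [y1, y2])"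
  shows "arrow_subst m f = g"
proof
  fix z :: path
  obtain w ys where z: "z = (w, ys)"
    by (cases z)
  show "arrow_subst m f z = g z"
  proof (cases "length ys = 2")
    case True
    then obtain y1 y2 where "ys = [y1, y2]"
      by (auto simp: numeral_2_eq_2 length_Suc_conv)
    then show ?thesis
      by (simp add: z arrow_subst_apply numeral_2_eq_2 sum_lists_length_Suc[OF finite_UNIV_arr] fg
          flip: fg)
  next
    case False
    then show ?thesis
      by (simp add: z arrow_subst_apply f g)
  qed
qed

definition swap_arrows :: "'k::field \<Rightarrow> arr \<Rightarrow> arr \<Rightarrow> 'k" where
  "swap_arrows q x y = (case x of
      Aa \<Rightarrow> (case y of Bb \<Rightarrow> q - 1 | Dd \<Rightarrow> 1 | _ \<Rightarrow> 0)
    | Cc \<Rightarrow> (case y of Bb \<Rightarrow> 1 | _ \<Rightarrow> 0)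
    | Bb \<Rightarrow> (case y of Aa \<Rightarrow> -1 | Cc \<Rightarrow> -1 | _ \<Rightarrow> 0)
    | Dd \<Rightarrow> (case y of Aa \<Rightarrow> -1 | Cc \<Rightarrow> inverse q - 1 | _ \<Rightarrow> 0))"

definition swap_arrows_inv :: "'k::field \<Rightarrow> arr \<Rightarrow> arr \<Rightarrow> 'k" where
  "swap_arrows_inv q x y = (case x of
      Aa \<Rightarrow> (case y of Bb \<Rightarrow> q - 1 | Dd \<Rightarrow> - q | _ \<Rightarrow> 0)
    | Cc \<Rightarrow> (case y of Bb \<Rightarrow> - q | Dd \<Rightarrow> q | _ \<Rightarrow> 0)
    | Bb \<Rightarrow> (case y of Cc \<Rightarrow> 1 | _ \<Rightarrow> 0)
    | Dd \<Rightarrow> (case y of Aa \<Rightarrow> 1 | Cc \<Rightarrow> 1 - q | _ \<Rightarrow> 0))"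

lemma swaps_vertices_swap_arrows: "swaps_vertices (swap_arrows q)"
  and swaps_vertices_swap_arrows_inv: "swaps_vertices (swap_arrows_inv q)"
  unfolding swaps_vertices_def
  by (intro allI, case_tac x; case_tac y; simp add: swap_arrows_def swap_arrows_inv_def)+

lemma swap_arrows_inverse:
  fixes q :: "'k::field"
  assumes "q \<noteq> 0"
  shows "(\<Sum>x\<in>UNIV. swap_arrows q z x * swap_arrows_inv q x y) = (if z = y then 1 else 0)"
    and "(\<Sum>x\<in>UNIV. swap_arrows_inv q z x * swap_arrows q x y) = (if z = y then 1 else 0)"
  using assms by (cases z; cases y; simp add: UNIV_arr swap_arrows_def swap_arrows_inv_def field_simps)+

lemma arrow_subst_rel1:
  assumes "q \<noteq> 0"
  shows "arrow_subst (swap_arrows q) rel1 = rel2 (inverse q :: 'k::field)"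
  apply (rule arrow_subst_eqI_length2)
    apply (auto simp: rel1_def rel2_def)[2]
  subgoal for w y1 y2
    using assms by (cases w; cases y1; cases y2) (simp_all add: UNIV_arr rel1_def rel2_def swap_arrows_def field_simps)
  done

lemma arrow_subst_rel2:
  assumes "q \<noteq> 0"
  shows "arrow_subst (swap_arrows q) (rel2 q) = (rel1 :: path \<Rightarrow> 'k::field)"
  apply (rule arrow_subst_eqI_length2)
    apply (auto simp: rel1_def rel2_def)[2]
  subgoal for w y1 y2
    using assms by (cases w; cases y1; cases y2) (simp_all add: UNIV_arr rel1_def rel2_def swap_arrows_def field_simps)
  done

lemma D_alg_iso_inverse:
  fixes q :: "'k::field"
  assumes "q \<noteq> 0"
  shows "D_alg_iso q (inverse q)"
proof (rule D_alg_isoI)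
  let ?T = "arrow_subst (swap_arrows q)" and ?T' = "arrow_subst (swap_arrows_inv q)"
  show "?T \<in> ring_hom path_alg path_alg" "?T' \<in> ring_hom path_alg path_alg"
    by (simp_all add: arrow_subst_hom swaps_vertices_swap_arrows swaps_vertices_swap_arrows_inv)
  show "?T' (?T f) = f" "?T (?T' f) = f" for f
    by (simp_all add: arrow_subst_inverse swap_arrows_inverse[OF assms])
  show "?T (pa_smult c f) = pa_smult c (?T f)" for c f
    by (rule arrow_subst_smult)
  have "?T' rel1 = rel2 q" "?T' (rel2 (inverse q)) = rel1"
    using arrow_subst_inverse[of "swap_arrows q" "swap_arrows_inv q"] swap_arrows_inverse[OF assms]
    by (simp_all flip: arrow_subst_rel1[OF assms] arrow_subst_rel2[OF assms])
  then show "?T rel1 \<in> D_ideal (inverse q)" "?T (rel2 q) \<in> D_ideal (inverse q)"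
    "?T' rel1 \<in> D_ideal q" "?T' (rel2 (inverse q)) \<in> D_ideal q"
    by (simp_all add: arrow_subst_rel1 arrow_subst_rel2 assms rel1_mem_D_ideal rel2_mem_D_ideal)
qed

theorem proposition3p9:
  fixes p q :: "'k::field_char_0"
  assumes "alg_closed TYPE('k)"
    and "p \<noteq> 0" and "q \<noteq> 0"
  shows "D_alg_iso q p \<longleftrightarrow> (p = q \<or> p = inverse q)"
proof
  assume "D_alg_iso q p"
  then obtain \<phi> where "D_iso \<phi> q p"
    by (auto simp: D_alg_iso_iff)
  then have "p = q \<or> p * q = 1"
    by (rule D_iso.params_eq_or_inverse)
  then show "p = q \<or> p = inverse q"
    using assms(3) by (auto simp: field_simps)
next
  assume "p = q \<or> p = inverse q"
  then show "D_alg_iso q p"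
    using D_alg_iso_refl D_alg_iso_inverse[OF assms(3)] by auto
qed

end
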